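(* Let $M,N$ be positive integers, let $Z_0\ge Z_1\ge\dots\ge Z_{N-1}$ be real numbers, let $(S^{(t)})_{t\in\mathbb Z}$ be real numbers, and let $W^{(m)}_r\in\mathbb R$ ($r=0,\dots,N-1$, $m\in\mathbb Z$) with $W^{(m)}_r=W^{(m\bmod M)}_r$, such that \[ W^{(m)}_{r_1}-W^{(m+1)}_{r_1}+W^{(m+1)}_{r_0}-W^{(m)}_{r_0}+\frac{Z_{r_0}-Z_{r_1}}{M}\ge0 \] for all $m=0,\dots,M-1$ and all $0\le r_0<r_1\le N-1$. For $k,t\in\mathbb Z$ let $T^{(k,t)}_0:=0$ and, for $n=1,\dots,N$, \[ T^{(k,t)}_n:=\min_{0\le r_0<r_1<\dots<r_{n-1}\le N-1}\sum_{j=0}^{n-1}\Big(W^{(k+j)}_{r_j}+\frac{k+(M+1)j}{M}Z_{r_j}+\sum_{\tau=0}^{t-1}\min(Z_{r_j},S^{(\tau)})\Big), \] and $T^{(k,t)}_n:=+\infty$ for $n>N$. Define \begin{gather*} Q^{(k,t)}_n=T^{(k,t)}_n-T^{(k,t)}_{n+1}+T^{(k+1,t)}_{n+1}-T^{(k+1,t)}_n,\quad D^{(k,t)}_n=T^{(k,t+1)}_n-T^{(k,t)}_{n+1}+T^{(k+1,t)}_{n+1}-T^{(k+1,t+1)}_n\quad(0\le n\le N-1),\\ E^{(k,t)}_n=T^{(k,t)}_{n+2}-T^{(k,t)}_{n+1}+T^{(k+M,t)}_n-T^{(k+M,t)}_{n+1},\quad \tilde E^{(k,t)}_n=T^{(k,t)}_{n+2}-T^{(k,t)}_{n+1}+T^{(k,t+1)}_n-T^{(k,t+1)}_{n+1},\\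 F^{(k,t)}_n=T^{(k,t)}_{n+2}-T^{(k,t+1)}_{n+1}+T^{(k+M,t+1)}_n-T^{(k+M,t)}_{n+1}+S^{(t)}\quad(0\le n\le N-1). \end{gather*} Then these give a solution of the nonautonomous ultradiscrete hungry Toda lattice with the finite lattice condition: for all $k,t\in\mathbb Z$, $E^{(k,t)}_{N-1}=\tilde E^{(k,t)}_{N-1}=+\infty$ and \begin{gather*} Q^{(k,t+1)}_n=\min(D^{(k,t)}_n,\tilde E^{(k,t)}_n)\ (0\le n\le N-1),\qquad E^{(k,t+1)}_n=\min(F^{(k,t)}_n,\tilde E^{(k+M,t)}_n)\ (0\le n\le N-2),\\ D^{(k,t)}_{n+1}=D^{(k,t)}_n-Q^{(k,t+1)}_n+Q^{(k,t)}_{n+1},\qquad \tilde E^{(k+1,t)}_n=\tilde E^{(k,t)}_n-Q^{(k,t+1)}_n+Q^{(k,t)}_{n+1}\qquad(0\le n\le N-2),\\ F^{(k,t)}_{n+1}=F^{(k,t)}_n-E^{(k,t+1)}_n+E^{(k,t)}_{n+1},\qquad \tilde E^{(k,t)}_{n+1}=\tilde E^{(k+M,t)}_n-E^{(k,t+1)}_n+E^{(k,t)}_{n+1}\qquad(0\le n\le N-2), \end{gather*} with boundary conditions \[ D^{(k,t)}_0=Q^{(k,t)}_0,\quad F^{(k,t)}_0=E^{(k,t)}_0+\max\Big(0,S^{(t)}-\sum_{j=0}^{M-1}Q^{(k+j,t)}_0\Big),\quad \tilde E^{(k,t)}_0=E^{(k,t)}_0+\max\Big(0,\sum_{j=0}^{M-1}Q^{(k+j,t)}_0-S^{(t)}\Big).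 \]
   Context: Arithmetic with $+\infty$: $a+\infty=+\infty$ for $a\in\mathbb R\cup\{+\infty\}$, $\min(a,+\infty)=a$; expressions containing $+\infty$ with a minus sign occur only as $(+\infty)-a$ with $a$ finite, which equals $+\infty$. Sums $\sum_{\tau=0}^{t-1}a_\tau$ equal $0$ for $t=0$ and $-\sum_{\tau=t}^{-1}a_\tau$ for $t<0$. *)

theory Defs
  imports Complex_Main "HOL-Library.Extended_Real"
begin

definition sumS :: "(int \<Rightarrow> real) \<Rightarrow> int \<Rightarrow> real \<Rightarrow> real" where
  "sumS S t x = (if 0 \<le> t then (\<Sum>\<tau>\<in>{0..<t}. min x (S \<tau>))
                 else - (\<Sum>\<tau>\<in>{t..<0}. min x (S \<tau>)))"

definition incr_lists :: "nat \<Rightarrow> nat \<Rightarrow> nat list set" where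
  "incr_lists N n = {rs. length rs = n \<and> sorted_wrt (<) rs \<and> (\<forall>r\<in>set rs. r < N)}"

definition Tval :: "(int \<Rightarrow> nat \<Rightarrow> real) \<Rightarrow> (nat \<Rightarrow> real) \<Rightarrow> (int \<Rightarrow> real) \<Rightarrow> nat \<Rightarrow>
    int \<Rightarrow> int \<Rightarrow> nat \<Rightarrow> nat list \<Rightarrow> real" where
  "Tval W Z S M k t n rs = (\<Sum>j<n. W (k + int j) (rs ! j)
      + (real_of_int k + real (M + 1) * real j) / real M * Z (rs ! j)
      + sumS S t (Z (rs ! j)))"

definition T :: "(int \<Rightarrow> nat \<Rightarrow> real) \<Rightarrow> (nat \<Rightarrow> real) \<Rightarrow> (int \<Rightarrow> real) \<Rightarrow> nat \<Rightarrow> nat \<Rightarrow>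
    int \<Rightarrow> int \<Rightarrow> nat \<Rightarrow> ereal" where
  "T W Z S M N k t n =
     (if n = 0 then 0
      else if n \<le> N then ereal (Min (Tval W Z S M k t n ` incr_lists N n))
      else \<infinity>)"

definition Qf where
  "Qf W Z S M N k t n = T W Z S M N k t n - T W Z S M N k t (n+1)
      + T W Z S M N (k+1) t (n+1) - T W Z S M N (k+1) t n"

definition Df where
  "Df W Z S M N k t n = T W Z S M N k (t+1) n - T W Z S M N k t (n+1)
      + T W Z S M N (k+1) t (n+1) - T W Z S M N (k+1) (t+1) n"

definition Ef where
  "Ef W Z S M N k t n = T W Z S M N k t (n+2) - T W Z S M N k t (n+1)
      + T W Z S M N (k + int M) t n - T W Z S M N (k + int M) t (n+1)"

definition Etf where
  "Etf W Z S M N k t n = T W Z S M N k t (n+2) - T W Z S M N k t (n+1)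
      + T W Z S M N k (t+1) n - T W Z S M N k (t+1) (n+1)"

definition Ff where
  "Ff W Z S M N k t n = T W Z S M N k t (n+2) - T W Z S M N k (t+1) (n+1)
      + T W Z S M N (k + int M) (t+1) n - T W Z S M N (k + int M) t (n+1) + ereal (S t)"

end

theory Submission
  imports Defs
begin

text \<open>Each value \<open>T^(k',t')_n\<close> occurring in one of the relations, with
  \<open>k' \<in> {k, k + 1, k + M}\<close> and \<open>t' \<in> {t, t + 1}\<close>, is a minimum over row selections
  \<open>r_0 < \<dots> < r_(n-1)\<close> of a cost \<open>\<Sum>_j X \<rho>_j r_j + \<sigma>_j Z r_j\<close>, where the positions \<open>(\<rho>_j, \<sigma>_j)\<close>
  are \<open>(j, j)\<close> shifted according to \<open>k'\<close>, and passing to \<open>t + 1\<close> adds \<open>\<Sum>_j min (Z r_j) (S t)\<close>.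
  As \<open>Z\<close> is antitone, this capped sum is \<open>i S t\<close> plus the \<open>Z\<close>-terms from row \<open>i\<close> on, where
  \<open>i\<close> counts the rows with \<open>S t < Z r_j\<close>, so it only shifts positions again. The hypothesis on \<open>W\<close> makes \<open>X\<close> a Monge array, hence replacing two
  selections by their pointwise minimum and maximum, or swapping their tails where they cross,
  does not increase a sum of two costs. Applied to optimal selections this shows, for each
  relation involving \<open>min\<close> or \<open>max\<close>, that one side lies below both alternatives and
  equals one of them; the remaining relations are telescoping identities.\<close>

lemma finite_downclosed_eq_lessThan:
  assumes "finite (A::nat set)" "\<And>j j'. j \<in> A \<Longrightarrow> j' < j \<Longrightarrow> j' \<in> A"
  shows "A = {..<card A}"
proof (cases "A = {}")
  case True then show ?thesis by simp
next
  case False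
  define m where "m = Max A"
  have mA: "m \<in> A" using False assms(1) m_def by simp
  have "A = {..m}"
  proof
    show "A \<subseteq> {..m}" using assms(1) m_def by auto
    show "{..m} \<subseteq> A"
    proof
      fix j assume "j \<in> {..m}"
      then show "j \<in> A" using mA assms(2)[of m j] by (cases "j = m") auto
    qed
  qed
  then show ?thesis by (simp add: lessThan_Suc_atMost[symmetric])
qed

lemma nat_eq_by_lower_sets: "(\<And>j::nat. j < a \<longleftrightarrow> j < b) \<Longrightarrow> a = b"
  by (metis less_irrefl linorder_neqE_nat)

lemma discrete_ivt_up:
  fixes g :: "nat \<Rightarrow> int"
  assumes "\<And>z. x \<le> z \<Longrightarrow> z < y \<Longrightarrow> g (Suc z) \<le> g z + 1" "x \<le> y" "g x \<le> v" "v \<le> g y"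
  shows "\<exists>z. x \<le> z \<and> z \<le> y \<and> g z = v"
  using assms(2,1,4)
proof (induction y rule: dec_induct)
  case base then show ?case using assms(3) by (intro exI[of _ x]) simp
next
  case (step y)
  have mono: "\<And>z. x \<le> z \<Longrightarrow> z < y \<Longrightarrow> g (Suc z) \<le> g z + 1" using step.prems(1) by simp
  show ?case
  proof (cases "v \<le> g y")
    case True
    then obtain z where "x \<le> z" "z \<le> y" "g z = v" using step.IH[OF mono True] by blast
    then show ?thesis by (intro exI[of _ z]) auto
  next
    case False
    have "g (Suc y) \<le> g y + 1" using step.prems(1)[of y] step.hyps by simp
    then have "g (Suc y) = v" using False step.prems(2) by simp
    then show ?thesis using step.hyps by (intro exI[of _ "Suc y"]) auto
  qed
qed

lemma discrete_ivt_down: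
  fixes g :: "nat \<Rightarrow> int"
  assumes "\<And>z. x \<le> z \<Longrightarrow> z < y \<Longrightarrow> g z \<le> g (Suc z) + 1" "x \<le> y" "v \<le> g x" "g y \<le> v"
  shows "\<exists>z. x \<le> z \<and> z \<le> y \<and> g z = v"
proof -
  have "\<exists>z. x \<le> z \<and> z \<le> y \<and> (\<lambda>z. - g z) z = - v"
    by (rule discrete_ivt_up) (use assms in \<open>auto simp: algebra_simps\<close>)
  then show ?thesis by auto
qed

lemma sum_lessThan_split: "(a::nat) \<le> n \<Longrightarrow> (\<Sum>j<n. g j) = (\<Sum>j<a. g j) + (\<Sum>j\<in>{a..<n}. g j)"
proof -
  assume "a \<le> n"
  then have "{..<n} = {..<a} \<union> {a..<n}" by auto
  then have "sum g {..<n} = sum g ({..<a} \<union> {a..<n})" by simp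
  also have "\<dots> = sum g {..<a} + sum g {a..<n}" by (rule sum.union_disjoint) auto
  finally show ?thesis .
qed

section \<open>Costs of row selections\<close>

text \<open>The \<open>j\<close>-th row of \<open>T^(k+a+bM,t)\<close> sits at position \<open>(j + a, j + b)\<close>, because
  \<open>(k + a + bM + (M + 1) j) / M = (k + a + j) / M + (j + b)\<close> and \<open>W\<close> has period \<open>M\<close>.
  The suffix of each name records the offset \<open>a + bM\<close>.\<close>

definition pos_k :: "nat \<Rightarrow> nat \<times> nat" where "pos_k j = (j, j)"

definition pos_k1 :: "nat \<Rightarrow> nat \<times> nat" where "pos_k1 j = (Suc j, j)"

definition pos_kM :: "nat \<Rightarrow> nat \<times> nat" where "pos_kM j = (j, Suc j)"

definition pos_k1M :: "nat \<Rightarrow> nat \<times> nat" where "pos_k1M j = (Suc j, Suc j)"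

definition pos_k2M :: "nat \<Rightarrow> nat \<times> nat" where "pos_k2M j = (j, Suc (Suc j))"

text \<open>If \<open>b'\<close> is \<open>b\<close> shifted by \<open>(0, 1)\<close>, a capped sum \<open>\<Sum>_j min (Z r_j) S\<close> turns into
  \<open>i S\<close> plus the cost at \<open>switch_pos b b' i\<close>, where \<open>i\<close> counts the rows with \<open>S < Z r_j\<close>.\<close>

definition switch_pos :: "(nat \<Rightarrow> nat \<times> nat) \<Rightarrow> (nat \<Rightarrow> nat \<times> nat) \<Rightarrow> nat \<Rightarrow> nat \<Rightarrow> nat \<times> nat"
  where "switch_pos b b' i j = (if j < i then b j else b' j)"

locale monge_frame =
  fixes N :: nat and X :: "nat \<Rightarrow> nat \<Rightarrow> real" and Z :: "nat \<Rightarrow> real"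
  assumes X_step_monge: "\<And>\<rho> r0 r1. r0 \<le> r1 \<Longrightarrow> r1 < N \<Longrightarrow>
      X (Suc \<rho>) r1 - X \<rho> r1 \<le> X (Suc \<rho>) r0 - X \<rho> r0"
    and Z_antimono: "\<And>i j. i \<le> j \<Longrightarrow> j < N \<Longrightarrow> Z j \<le> Z i"
begin

definition cost :: "nat \<times> nat \<Rightarrow> nat \<Rightarrow> real" where
  "cost p r = X (fst p) r + real (snd p) * Z r"

definition total_cost :: "(nat \<Rightarrow> nat \<times> nat) \<Rightarrow> nat \<Rightarrow> (nat \<Rightarrow> nat) \<Rightarrow> real" where
  "total_cost pos n f = (\<Sum>j<n. cost (pos j) (f j))"

definition selection :: "nat \<Rightarrow> (nat \<Rightarrow> nat) \<Rightarrow> bool" where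
  "selection n f \<longleftrightarrow> (\<forall>i j. i < j \<longrightarrow> j < n \<longrightarrow> f i < f j) \<and> (\<forall>j<n. f j < N)"

lemma X_monge:
  assumes "\<rho> \<le> \<rho>'" "r0 \<le> r1" "r1 < N"
  shows "X \<rho>' r1 - X \<rho> r1 \<le> X \<rho>' r0 - X \<rho> r0"
  using assms(1)
proof (induction \<rho>' rule: dec_induct)
  case base then show ?case by simp
next
  case (step m)
  have "X (Suc m) r1 - X m r1 \<le> X (Suc m) r0 - X m r0" using X_step_monge assms by blast
  then show ?case using step by linarith
qed

lemma cost_monge:
  assumes "fst p \<le> fst q" "snd p \<le> snd q" "r0 \<le> r1" "r1 < N"
  shows "cost p r0 + cost q r1 \<le> cost p r1 + cost q r0"
proof -
  have x: "X (fst q) r1 - X (fst p) r1 \<le> X (fst q) r0 - X (fst p) r0"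
    using X_monge assms by blast
  have z: "Z r1 \<le> Z r0" using Z_antimono assms by blast
  have "real (snd q) * Z r1 - real (snd p) * Z r1 \<le> real (snd q) * Z r0 - real (snd p) * Z r0"
  proof -
    have "(real (snd q) - real (snd p)) * Z r1 \<le> (real (snd q) - real (snd p)) * Z r0"
      using z assms(2) by (intro mult_left_mono) auto
    then show ?thesis by (simp add: algebra_simps)
  qed
  then show ?thesis using x unfolding cost_def by linarith
qed

lemma cost_exchange:
  assumes "fst lo \<le> fst hi" "snd lo \<le> snd hi" "a < N" "b < N"
  shows "cost hi (max a b) + cost lo (min a b) \<le> cost hi a + cost lo b"
proof (cases "a \<le> b")
  case True
  then have "cost lo a + cost hi b \<le> cost lo b + cost hi a"
    using cost_monge[OF assms(1,2) True assms(4)] by simp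
  then show ?thesis using True by (simp add: max_def min_def)
next
  case False then show ?thesis by (simp add: max_def min_def)
qed

lemma cost_kM: "cost (pos_kM j) r = cost (pos_k j) r + Z r"
  unfolding cost_def pos_kM_def pos_k_def by (simp add: algebra_simps)

lemma cost_k1M: "cost (pos_k1M j) r = cost (pos_k1 j) r + Z r"
  unfolding cost_def pos_k1M_def pos_k1_def by (simp add: algebra_simps)

lemma cost_k2M: "cost (pos_k2M j) r = cost (pos_kM j) r + Z r"
  unfolding cost_def pos_k2M_def pos_kM_def by (simp add: algebra_simps)

lemma cost_cross_k1_kM:
  assumes "a < N" "b < N"
  shows "cost (pos_k j) (min a b) + cost (pos_k1M j) (max a b)
      \<le> cost (pos_k1 j) a + cost (pos_kM j) b"
proof (cases "a \<le> b")
  case True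
  have "X (Suc j) b - X j b \<le> X (Suc j) a - X j a" using X_step_monge True assms by blast
  then show ?thesis using True unfolding cost_def pos_k_def pos_k1M_def pos_k1_def pos_kM_def
    by (simp add: min_def max_def algebra_simps)
next
  case False
  have "Z a \<le> Z b" using Z_antimono False assms by simp
  then show ?thesis using False unfolding cost_def pos_k_def pos_k1M_def pos_k1_def pos_kM_def
    by (simp add: min_def max_def algebra_simps)
qed

lemma cost_cross_kM_k2M:
  assumes "a < N" "b < N"
  shows "cost (pos_kM (Suc j)) (max a b) + cost (pos_kM j) (min a b)
      \<le> cost (pos_k (Suc j)) a + cost (pos_k2M j) b"
proof (cases "a < b")
  case True
  have "X (Suc j) b - X j b \<le> X (Suc j) a - X j a" using X_step_monge True assms by simp
  then show ?thesis using True unfolding cost_def pos_k_def pos_k2M_def pos_kM_def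
    by (simp add: min_def max_def algebra_simps)
next
  case False
  have "Z a \<le> Z b" using Z_antimono False assms by simp
  then show ?thesis using False unfolding cost_def pos_k_def pos_k2M_def pos_kM_def
    by (simp add: min_def max_def algebra_simps)
qed

lemma total_cost_add: "total_cost A n f + total_cost B n g
    = (\<Sum>j<n. cost (A j) (f j) + cost (B j) (g j))"
  unfolding total_cost_def by (simp add: sum.distrib)

lemma total_cost_switch:
  assumes "\<And>j r. cost (b' j) r = cost (b j) r + Z r"
  shows "total_cost (switch_pos b b' i) n f = total_cost b n f + (\<Sum>j\<in>{i..<n}. Z (f j))"
proof -
  have "total_cost (switch_pos b b' i) n f = (\<Sum>j<n. cost (b j) (f j) + (if i
      \<le> j then Z (f j) else 0))"
    unfolding total_cost_def by (rule sum.cong) (auto simp: switch_pos_def assms)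
  also have "\<dots> = total_cost b n f + (\<Sum>j<n. if i \<le> j then Z (f j) else 0)"
    unfolding total_cost_def by (simp add: sum.distrib)
  also have "(\<Sum>j<n. if i \<le> j then Z (f j) else 0) = (\<Sum>j\<in>{..<n} \<inter> {j. i \<le> j}. Z (f j))"
    by (simp add: sum.inter_restrict)
  also have "{..<n} \<inter> {j. i \<le> j} = {i..<n}" by auto
  finally show ?thesis .
qed

lemma total_cost_switch_full: "total_cost (switch_pos b b' n) n f = total_cost b n f"
  unfolding total_cost_def by (rule sum.cong) (auto simp: switch_pos_def)

lemma total_cost_switch_zero: "total_cost (switch_pos b b' 0) n f = total_cost b' n f"
  unfolding total_cost_def by (rule sum.cong) (auto simp: switch_pos_def)

lemma selection_mono: "selection n f \<Longrightarrow> i \<le> j \<Longrightarrow> j < n \<Longrightarrow> f i \<le> f j"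
  unfolding selection_def by (metis le_less)

lemma selection_bound: "selection n f \<Longrightarrow> j < n \<Longrightarrow> f j < N"
  unfolding selection_def by blast

lemma selection_ge_index: "selection n f \<Longrightarrow> j < n \<Longrightarrow> j \<le> f j"
proof (induction j)
  case 0 then show ?case by simp
next
  case (Suc j)
  then have "f j < f (Suc j)" unfolding selection_def by auto
  then show ?case using Suc by simp
qed

lemma selection_length_le: "selection n f \<Longrightarrow> n \<le> N"
proof (cases n)
  case 0 then show ?thesis by simp
next
  case (Suc m)
  assume a: "selection n f"
  then have "m \<le> f m" using selection_ge_index Suc by simp
  moreover have "f m < N" using selection_bound a Suc by simp
  ultimately show ?thesis using Suc by simp
qed

lemma selection_min_max:
  assumes "selection n f" "selection n g"
  shows "selection n (\<lambda>j. min (f j) (g j))" "selection n (\<lambda>j. max (f j) (g j))"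
  using assms unfolding selection_def
  by (auto simp: min_less_iff_disj less_max_iff_disj) (metis less_trans not_less_iff_gr_or_eq)+

lemma selection_le: "selection n f \<Longrightarrow> m \<le> n \<Longrightarrow> selection m f"
  unfolding selection_def by auto

lemma selection_drop_first: "selection (Suc n) p \<Longrightarrow> selection n (\<lambda>j. p (Suc j))"
  unfolding selection_def by auto

lemma selection_max_shift:
  assumes p: "selection (Suc n) p" and q: "selection n q"
  shows "selection (Suc n) (\<lambda>j. case j of 0 \<Rightarrow> p 0 | Suc j' \<Rightarrow> max (p (Suc j')) (q j'))"
    (is "selection _ ?P")
  unfolding selection_def
proof (intro conjI allI impI)
  have pi: "\<And>a b. a < b \<Longrightarrow> b < Suc n \<Longrightarrow> p a < p b" and qi: "\<And>a b. a < b \<Longrightarrow> b < n \<Longrightarrow> q a < q b"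
    using p q unfolding selection_def by auto
  fix a b assume ab: "a < b" "b < Suc n"
  then obtain b' where b': "b = Suc b'" by (cases b) auto
  show "?P a < ?P b"
  proof (cases a)
    case 0
    then show ?thesis using ab b' pi[of 0 "Suc b'"] by (simp add: less_max_iff_disj)
  next
    case (Suc a')
    then show ?thesis using ab b' pi[of "Suc a'" "Suc b'"] qi[of a' b'] by (auto simp: max_def)
  qed
next
  fix j assume "j < Suc n"
  then show "?P j < N" using p q unfolding selection_def by (cases j) auto
qed

lemma selection_min_extend:
  assumes p: "selection (Suc n) p" and q: "selection n q"
  shows "selection (Suc n) (\<lambda>j. if j < n then min (p j) (q j) else p n)"
    (is "selection _ ?P")
  unfolding selection_def
proof (intro conjI allI impI)
  have pi: "\<And>a b. a < b \<Longrightarrow> b < Suc n \<Longrightarrow> p a < p b" and qi: "\<And>a b. a < b \<Longrightarrow> b < n \<Longrightarrow> q a < q b"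
    using p q unfolding selection_def by auto
  fix a b assume ab: "a < b" "b < Suc n"
  show "?P a < ?P b"
  proof (cases "b < n")
    case True
    then show ?thesis using ab pi[of a b] qi[of a b] by (auto simp: min_def)
  next
    case False
    then have "b = n" using ab by simp
    then show ?thesis using ab pi[of a n] by (simp add: min_less_iff_disj)
  qed
next
  fix j assume "j < Suc n"
  then show "?P j < N" using p q unfolding selection_def by (auto simp: min_less_iff_disj)
qed

lemma selection_splice:
  assumes f: "selection m f" and g: "selection n g" and "a \<le> m" "b \<le> n"
    and below: "\<And>j. j < a \<Longrightarrow> f j < x" and above: "\<And>j. b \<le> j \<Longrightarrow> j < n \<Longrightarrow> x \<le> g j"
  shows "selection (a + (n - b)) (\<lambda>j. if j < a then f j else g (j - a + b))"
  unfolding selection_def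
proof (intro conjI allI impI)
  fix i j assume ij: "i < j" "j < a + (n - b)"
  show "(if i < a then f i else g (i - a + b)) < (if j < a then f j else g (j - a + b))"
  proof (cases "j < a")
    case True
    then show ?thesis using ij f assms(3) unfolding selection_def by auto
  next
    case False
    then have "x \<le> g (j - a + b)" using above ij by auto
    moreover have "f i < x" if "i < a" using below that .
    moreover have "g (i - a + b) < g (j - a + b)" if "\<not> i < a"
      using that False ij g unfolding selection_def by auto
    ultimately show ?thesis using False by auto
  qed
next
  fix j assume "j < a + (n - b)"
  then show "(if j < a then f j else g (j - a + b)) < N"
    using f g assms(3) unfolding selection_def by auto
qed

definition count_below :: "nat \<Rightarrow> (nat \<Rightarrow> nat) \<Rightarrow> nat \<Rightarrow> nat" where
  "count_below n f x = card {j. j < n \<and> f j < x}"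

lemma less_count_below_iff:
  assumes "selection n f"
  shows "j < count_below n f x \<longleftrightarrow> j < n \<and> f j < x"
proof -
  let ?A = "{j. j < n \<and> f j < x}"
  have "?A = {..<card ?A}"
  proof (rule finite_downclosed_eq_lessThan)
    show "finite ?A" by simp
    fix j j' assume jA: "j \<in> ?A" and "j' < j"
    then have "f j' < f j" using assms unfolding selection_def by auto
    then show "j' \<in> ?A" using jA \<open>j' < j\<close> by auto
  qed
  then have "j \<in> ?A \<longleftrightarrow> j < card ?A" by blast
  then show ?thesis unfolding count_below_def by simp
qed

lemma count_below_N: "selection n f \<Longrightarrow> count_below n f N = n"
  by (rule nat_eq_by_lower_sets) (auto simp: less_count_below_iff selection_def)

lemma count_below_at: "selection n f \<Longrightarrow> j < n \<Longrightarrow> count_below n f (f j) = j"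
  by (rule nat_eq_by_lower_sets) (auto simp: less_count_below_iff selection_def, metis less_trans not_less_iff_gr_or_eq)

lemma count_below_Suc_at: "selection n f \<Longrightarrow> j < n \<Longrightarrow> count_below n f (Suc (f j)) = Suc j"
proof (rule nat_eq_by_lower_sets)
  fix i assume a: "selection n f" "j < n"
  show "i < count_below n f (Suc (f j)) \<longleftrightarrow> i < Suc j"
  proof
    assume "i < count_below n f (Suc (f j))"
    then have "i < n" "f i \<le> f j" using a less_count_below_iff by auto
    then show "i < Suc j" using a unfolding selection_def by (metis leD not_less_eq)
  next
    assume "i < Suc j"
    then show "i < count_below n f (Suc (f j))"
      using a less_count_below_iff selection_mono[of n f i j] by auto
  qed
qed

lemma count_below_le: "count_below n f x \<le> n"
proof -
  have "count_below n f x \<le> card {..<n}" unfolding count_below_def by (rule card_mono) auto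
  then show ?thesis by simp
qed

lemma count_below_mono: "x \<le> y \<Longrightarrow> count_below n f x \<le> count_below n f y"
  unfolding count_below_def by (rule card_mono) auto

lemma count_below_Suc_le: 
  assumes "selection n f" shows "count_below n f (Suc x) \<le> Suc (count_below n f x)"
proof (rule ccontr)
  let ?c = "count_below n f x"
  assume "\<not> ?thesis"
  then have h: "?c < count_below n f (Suc x)" "Suc ?c < count_below n f (Suc x)" by auto
  have 1: "?c < n" "f ?c < Suc x" using h(1) less_count_below_iff[OF assms] by auto
  have 2: "Suc ?c < n" "f (Suc ?c) < Suc x" using h(2) less_count_below_iff[OF assms] by auto
  have "\<not> f ?c < x" using less_count_below_iff[OF assms, of ?c x] 1 by auto
  moreover have "f ?c < f (Suc ?c)" using assms 2 unfolding selection_def by auto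
  ultimately show False using 1 2 by simp
qed

lemma count_below_le_of_le:
  assumes P: "selection m P" and Q: "selection n Q" and "n \<le> m" and PQ: "\<And>j. j < n \<Longrightarrow> P j \<le> Q j"
  shows "count_below n Q x \<le> count_below m P x"
proof (rule ccontr)
  let ?c = "count_below m P x"
  assume "\<not> ?thesis"
  then have "?c < count_below n Q x" by simp
  then have "?c < n" "Q ?c < x" using less_count_below_iff[OF Q] by auto
  then have "P ?c < x" using PQ le_less_trans by blast
  then show False using less_count_below_iff[OF P, of ?c x] \<open>?c < n\<close> \<open>n \<le> m\<close> by simp
qed

lemma count_below_no_crossing:
  assumes P: "selection s P" and Q: "selection s Q" and PQ: "\<And>j. j < s \<Longrightarrow> P j \<le> Q j"
    and no_crossing: "\<And>y. x \<le> y \<Longrightarrow> y \<le> N \<Longrightarrow> count_below s P y \<noteq> Suc (count_below s Q y)"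
    and "x \<le> N"
  shows "count_below s P x = count_below s Q x"
proof (rule ccontr)
  define g where "g z = int (count_below s P z) - int (count_below s Q z)" for z
  assume "count_below s P x \<noteq> count_below s Q x"
  then have "1 \<le> g x" using count_below_le_of_le[OF P Q _ PQ, of x] unfolding g_def by simp
  moreover have "g N \<le> 1" using count_below_N[OF P] count_below_N[OF Q] unfolding g_def by simp
  moreover have "g z \<le> g (Suc z) + 1" for z
    using count_below_mono[of z "Suc z" s P] count_below_Suc_le[OF Q, of z] unfolding g_def by simp
  ultimately obtain z where "x \<le> z" "z \<le> N" "g z = 1"
    using discrete_ivt_down[of x N g 1] \<open>x \<le> N\<close> by auto
  then show False using no_crossing unfolding g_def by fastforce
qed

section \<open>Exchange arguments\<close>

lemma exchange_k1_le:
  assumes "selection s p" "selection s q"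
  shows "\<exists>P Q. selection s P \<and> selection s Q \<and>
    total_cost pos_k s P + total_cost (switch_pos pos_k1 pos_k1M i) s Q
        \<le> total_cost pos_k1 s p + total_cost (switch_pos pos_k pos_kM i) s q"
proof (intro exI conjI)
  show "selection s (\<lambda>j. min (p j) (q j))" "selection s (\<lambda>j. max (p j) (q j))"
    using selection_min_max assms by auto
  show "total_cost pos_k s (\<lambda>j. min (p j) (q j))
      + total_cost (switch_pos pos_k1 pos_k1M i) s (\<lambda>j. max (p j) (q j))
      \<le> total_cost pos_k1 s p + total_cost (switch_pos pos_k pos_kM i) s q"
    unfolding total_cost_add
  proof (rule sum_mono)
    fix j assume "j \<in> {..<s}"
    then have ab: "p j < N" "q j < N" using assms selection_bound by auto
    show "cost (pos_k j) (min (p j) (q j)) + cost (switch_pos pos_k1 pos_k1M i j) (max (p j) (q j))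
        \<le> cost (pos_k1 j) (p j) + cost (switch_pos pos_k pos_kM i j) (q j)"
    proof (cases "j < i")
      case True
      have "cost (pos_k1 j) (max (p j) (q j)) + cost (pos_k j) (min (p j) (q j))
          \<le> cost (pos_k1 j) (p j) + cost (pos_k j) (q j)"
        by (rule cost_exchange) (use ab in \<open>auto simp: pos_k1_def pos_k_def\<close>)
      then show ?thesis using True by (simp add: switch_pos_def)
    next
      case False
      then show ?thesis using cost_cross_k1_kM[OF ab] by (simp add: switch_pos_def)
    qed
  qed
qed

lemma exchange_k1_length_le:
  assumes "selection (Suc (Suc m)) p" "selection m q" "i \<le> m"
  shows "\<exists>P Q. selection (Suc m) P \<and> selection (Suc m) Q \<and>
    total_cost pos_k (Suc m) P + total_cost (switch_pos pos_k1 pos_k1M i) (Suc m) Q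
        \<le> total_cost pos_k (Suc (Suc m)) p + total_cost (switch_pos pos_k1 pos_k1M i) m q"
proof -
  define P where "P j = (case j of 0 \<Rightarrow> p 0 | Suc j' \<Rightarrow> max (p (Suc j')) (q j'))" for j
  define Q where "Q j = (if j < m then min (p (Suc j)) (q j) else p (Suc m))" for j
  have pN: "\<And>a. a < Suc (Suc m) \<Longrightarrow> p a < N" and qN: "\<And>a. a < m \<Longrightarrow> q a < N"
    using assms(1,2) selection_bound by auto
  have incP: "selection (Suc m) P"
    unfolding P_def by (rule selection_max_shift[OF selection_le[OF assms(1)] assms(2)]) simp
  have incQ: "selection (Suc m) Q"
    unfolding Q_def by (rule selection_min_extend[OF selection_drop_first[OF assms(1)] assms(2)])
  have eq1: "total_cost pos_k (Suc m) P
      = cost (pos_k 0) (p 0) + (\<Sum>j<m. cost (pos_k (Suc j)) (max (p (Suc j)) (q j)))"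
    unfolding total_cost_def sum.lessThan_Suc_shift by (simp add: P_def)
  have eq2: "total_cost (switch_pos pos_k1 pos_k1M i) (Suc m) Q
      = (\<Sum>j<m. cost (switch_pos pos_k1 pos_k1M i j) (min (p (Suc j)) (q j)))
          + cost (pos_k (Suc m)) (p (Suc m))"
    unfolding total_cost_def using assms(3)
    by (simp add: Q_def switch_pos_def pos_k1M_def pos_k_def)
  have eq3: "total_cost pos_k (Suc (Suc m)) p
      = cost (pos_k 0) (p 0) + (\<Sum>j<m. cost (pos_k (Suc j)) (p (Suc j)))
          + cost (pos_k (Suc m)) (p (Suc m))"
    unfolding total_cost_def sum.lessThan_Suc_shift[of _ "Suc m"] by simp
  have le: "(\<Sum>j<m. cost (pos_k (Suc j)) (max (p (Suc j)) (q j)))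
      + (\<Sum>j<m. cost (switch_pos pos_k1 pos_k1M i j) (min (p (Suc j)) (q j)))
      \<le> (\<Sum>j<m. cost (pos_k (Suc j)) (p (Suc j))) + total_cost (switch_pos pos_k1 pos_k1M i) m q"
    unfolding total_cost_def sum.distrib[symmetric]
  proof (rule sum_mono)
    fix j assume "j \<in> {..<m}"
    then have ab: "p (Suc j) < N" "q j < N" using pN qN by auto
    show "cost (pos_k (Suc j)) (max (p (Suc j)) (q j))
        + cost (switch_pos pos_k1 pos_k1M i j) (min (p (Suc j)) (q j))
        \<le> cost (pos_k (Suc j)) (p (Suc j)) + cost (switch_pos pos_k1 pos_k1M i j) (q j)"
      by (rule cost_exchange) (use ab in \<open>auto simp: switch_pos_def pos_k1_def pos_k_def pos_k1M_def\<close>)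
  qed
  show ?thesis
    by (rule exI[of _ P], rule exI[of _ Q]) (use incP incQ eq1 eq2 eq3 le in linarith)
qed

lemma exchange_k1_at_crossing:
  assumes P: "selection s P" and Q: "selection s Q" and ib: "i \<le> b" and bs: "b < s"
    and Pb: "\<And>j. j < s \<Longrightarrow> P j < x \<longleftrightarrow> j < Suc b" and Qb: "\<And>j. j < s \<Longrightarrow> Q j < x \<longleftrightarrow> j < b"
  shows "\<exists>p q. selection (Suc s) p \<and> selection (s - 1) q \<and>
    total_cost pos_k (Suc s) p + total_cost (switch_pos pos_k1 pos_k1M i) (s - 1) q
      \<le> total_cost pos_k s P + total_cost (switch_pos pos_k1 pos_k1M i) s Q"
proof -
  define a where "a = Suc b"
  have as: "a \<le> s" using bs a_def by simp
  have Pa: "\<And>j. j < s \<Longrightarrow> P j < x \<longleftrightarrow> j < a" using Pb a_def by simp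
  define p where "p j = (if j < a then P j else Q (j - 1))" for j
  define q where "q j = (if j < b then Q j else P (Suc j))" for j
  have P_below: "P j < x" if "j < a" for j using Pa[of j] that as by simp
  have P_above: "x \<le> P j" if "a \<le> j" "j < s" for j using Pa[of j] that by simp
  have Q_below: "Q j < x" if "j < b" for j using Qb[of j] that as a_def by simp
  have Q_above: "x \<le> Q j" if "b \<le> j" "j < s" for j using Qb[of j] that by simp
  have incp: "selection (Suc s) p"
  proof -
    have "selection (a + (s - b)) (\<lambda>j. if j < a then P j else Q (j - a + b))"
      by (rule selection_splice[OF P Q _ _ P_below Q_above]) (use as a_def in simp_all)
    moreover have "(\<lambda>j. if j < a then P j else Q (j - a + b)) = p"
      by (auto simp: p_def a_def fun_eq_iff)
    ultimately show ?thesis using as a_def by simp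
  qed
  have incq: "selection (s - 1) q"
  proof -
    have "selection (b + (s - a)) (\<lambda>j. if j < b then Q j else P (j - b + a))"
      by (rule selection_splice[OF Q P _ _ Q_below P_above]) (use as a_def in simp_all)
    moreover have "(\<lambda>j. if j < b then Q j else P (j - b + a)) = q"
      by (auto simp: q_def a_def fun_eq_iff)
    ultimately show ?thesis using as a_def by simp
  qed
  have e1: "total_cost pos_k (Suc s) p
      = (\<Sum>j<a. cost (pos_k j) (P j)) + (\<Sum>j\<in>{b..<s}. cost (pos_k (Suc j)) (Q j))"
  proof -
    have "total_cost pos_k (Suc s) p
        = (\<Sum>j<a. cost (pos_k j) (p j)) + (\<Sum>j\<in>{a..<Suc s}. cost (pos_k j) (p j))"
      unfolding total_cost_def by (rule sum_lessThan_split) (use as in simp)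
    also have "{a..<Suc s} = {Suc b..<Suc s}" using a_def by simp
    also have "(\<Sum>j\<in>{Suc b..<Suc s}. cost (pos_k j) (p j))
        = (\<Sum>j\<in>{b..<s}. cost (pos_k (Suc j)) (p (Suc j)))"
      using sum.shift_bounds_nat_ivl[of "\<lambda>j. cost (pos_k j) (p j)" b 1 s] by simp
    also have "\<dots> = (\<Sum>j\<in>{b..<s}. cost (pos_k (Suc j)) (Q j))"
      by (rule sum.cong) (auto simp: p_def a_def)
    moreover have "(\<Sum>j<a. cost (pos_k j) (p j)) = (\<Sum>j<a. cost (pos_k j) (P j))"
      by (rule sum.cong) (auto simp: p_def)
    ultimately show ?thesis by simp
  qed
  have e2: "total_cost (switch_pos pos_k1 pos_k1M i) (s - 1) q
      = (\<Sum>j<b. cost (switch_pos pos_k1 pos_k1M i j) (Q j)) + (\<Sum>j\<in>{a..<s}. cost (pos_k j) (P j))"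
  proof -
    have "total_cost (switch_pos pos_k1 pos_k1M i) (s - 1) q
        = (\<Sum>j<b. cost (switch_pos pos_k1 pos_k1M i j) (q j))
            + (\<Sum>j\<in>{b..<s - 1}. cost (switch_pos pos_k1 pos_k1M i j) (q j))"
      unfolding total_cost_def by (rule sum_lessThan_split) (use as a_def in simp)
    also have "(\<Sum>j\<in>{b..<s - 1}. cost (switch_pos pos_k1 pos_k1M i j) (q j))
        = (\<Sum>j\<in>{b..<s - 1}. cost (pos_k (Suc j)) (P (Suc j)))"
      by (rule sum.cong) (use ib in \<open>auto simp: q_def switch_pos_def pos_k1M_def pos_k_def\<close>)
    also have "\<dots> = (\<Sum>j\<in>{a..<s}. cost (pos_k j) (P j))"
      using sum.shift_bounds_nat_ivl[of "\<lambda>j. cost (pos_k j) (P j)" b 1 "s - 1"] as a_def by simp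
    moreover have "(\<Sum>j<b. cost (switch_pos pos_k1 pos_k1M i j) (q j))
        = (\<Sum>j<b. cost (switch_pos pos_k1 pos_k1M i j) (Q j))"
      by (rule sum.cong) (auto simp: q_def)
    ultimately show ?thesis by simp
  qed
  have e3: "total_cost pos_k s P
      = (\<Sum>j<a. cost (pos_k j) (P j)) + (\<Sum>j\<in>{a..<s}. cost (pos_k j) (P j))"
    unfolding total_cost_def by (rule sum_lessThan_split[OF as])
  have e4: "total_cost (switch_pos pos_k1 pos_k1M i) s Q
      = (\<Sum>j<b. cost (switch_pos pos_k1 pos_k1M i j) (Q j))
          + (\<Sum>j\<in>{b..<s}. cost (pos_k (Suc j)) (Q j))"
  proof -
    have "total_cost (switch_pos pos_k1 pos_k1M i) s Q
        = (\<Sum>j<b. cost (switch_pos pos_k1 pos_k1M i j) (Q j))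
            + (\<Sum>j\<in>{b..<s}. cost (switch_pos pos_k1 pos_k1M i j) (Q j))"
      unfolding total_cost_def by (rule sum_lessThan_split) (use as a_def in simp)
    also have "(\<Sum>j\<in>{b..<s}. cost (switch_pos pos_k1 pos_k1M i j) (Q j))
        = (\<Sum>j\<in>{b..<s}. cost (pos_k (Suc j)) (Q j))"
      by (rule sum.cong) (use ib in \<open>auto simp: switch_pos_def pos_k1M_def pos_k_def\<close>)
    finally show ?thesis .
  qed
  have "total_cost pos_k (Suc s) p + total_cost (switch_pos pos_k1 pos_k1M i) (s - 1) q
      \<le> total_cost pos_k s P + total_cost (switch_pos pos_k1 pos_k1M i) s Q"
    using e1 e2 e3 e4 by simp
  then show ?thesis using incp incq by blast
qed

text \<open>Count the rows of \<open>P \<le> Q\<close> below a threshold \<open>x\<close>. Either \<open>P\<close> has exactly one more row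
  below some \<open>x\<close> exceeding the first \<open>i\<close> rows of \<open>Q\<close>, and exchanging the tails there moves a row
  from \<open>Q\<close> to \<open>P\<close>; or, by the discrete intermediate value theorem, \<open>P\<close> and \<open>Q\<close> agree from
  row \<open>i\<close> on.\<close>

lemma exchange_k1_tight_ordered:
  assumes P: "selection s P" and Q: "selection s Q" and i: "i < s" and PQ: "\<And>j. j < s \<Longrightarrow> P j \<le> Q j"
  shows "(\<exists>p q. selection s p \<and> selection s q \<and>
      total_cost pos_k1 s p + total_cost (switch_pos pos_k pos_kM i) s q
        \<le> total_cost pos_k s P + total_cost (switch_pos pos_k1 pos_k1M i) s Q)
    \<or> (\<exists>p q. selection (Suc s) p \<and> selection (s - 1) q \<and>
      total_cost pos_k (Suc s) p + total_cost (switch_pos pos_k1 pos_k1M i) (s - 1) q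
        \<le> total_cost pos_k s P + total_cost (switch_pos pos_k1 pos_k1M i) s Q)"
proof -
  define x0 where "x0 = (if i = 0 then 0 else Suc (Q (i - 1)))"
  have QN: "\<And>j. j < s \<Longrightarrow> Q j < N" using Q selection_bound by auto
  have x0_le_Q: "x0 \<le> Q j" if "i \<le> j" "j < s" for j
    using selection_def Q that unfolding x0_def by (cases "i = 0") (auto simp: Suc_le_eq)
  have cQx0: "i \<le> count_below s Q x" if "x0 \<le> x" for x
  proof (rule ccontr)
    assume "\<not> i \<le> count_below s Q x"
    then have "Q (i - 1) < x" "count_below s Q x \<le> i - 1"
      using that less_count_below_iff[OF Q, of "i - 1" x] i
      unfolding x0_def by (auto split: if_splits)
    then show False using less_count_below_iff[OF Q, of "i - 1" x] i by auto
  qed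
  show ?thesis
  proof (cases "\<exists>x. x0 \<le> x \<and> x \<le> N \<and> count_below s P x = Suc (count_below s Q x)")
    case True
    then obtain x where x: "x0 \<le> x" "count_below s P x = Suc (count_below s Q x)" by blast
    define b where "b = count_below s Q x"
    have "b < s" using x(2) count_below_le[of s P x] b_def by simp
    moreover have "P j < x \<longleftrightarrow> j < Suc b" if "j < s" for j
      using less_count_below_iff[OF P, of j x] x(2) b_def that by simp
    moreover have "\<And>j. j < s \<Longrightarrow> Q j < x \<longleftrightarrow> j < b" using less_count_below_iff[OF Q] b_def by auto
    ultimately show ?thesis using exchange_k1_at_crossing[OF P Q cQx0[OF x(1)]] b_def by blast
  next
    case False
    have eqPQ: "P j = Q j" if "i \<le> j" "j < s" for j
    proof -
      have "count_below s P (Q j) = count_below s Q (Q j)"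
        using count_below_no_crossing[OF P Q PQ] False x0_le_Q[OF that] QN[OF that(2)] by fastforce
      then have "\<not> P j < Q j"
        using less_count_below_iff[OF P, of j "Q j"] count_below_at[OF Q that(2)] that by simp
      then show ?thesis using PQ[OF that(2)] by simp
    qed
    have "total_cost pos_k1 s Q + total_cost (switch_pos pos_k pos_kM i) s P
        \<le> total_cost pos_k s P + total_cost (switch_pos pos_k1 pos_k1M i) s Q"
      unfolding total_cost_add
    proof (rule sum_mono)
      fix j assume "j \<in> {..<s}"
      then show "cost (pos_k1 j) (Q j) + cost (switch_pos pos_k pos_kM i j) (P j)
          \<le> cost (pos_k j) (P j) + cost (switch_pos pos_k1 pos_k1M i j) (Q j)"
        using eqPQ[of j] unfolding switch_pos_def cost_def pos_k1_def pos_kM_def pos_k_def pos_k1M_def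
        by (cases "j < i") (simp_all add: algebra_simps)
    qed
    then show ?thesis using P Q by blast
  qed
qed

lemma exchange_k1_tight:
  assumes P: "selection s P" and Q: "selection s Q" and i: "i < s"
  shows "(\<exists>p q. selection s p \<and> selection s q
      \<and> total_cost pos_k1 s p + total_cost (switch_pos pos_k pos_kM i) s q
          \<le> total_cost pos_k s P + total_cost (switch_pos pos_k1 pos_k1M i) s Q)
    \<or> (\<exists>p q. selection (Suc s) p \<and> selection (s - 1) q \<and>
          total_cost pos_k (Suc s) p + total_cost (switch_pos pos_k1 pos_k1M i) (s - 1) q
              \<le> total_cost pos_k s P + total_cost (switch_pos pos_k1 pos_k1M i) s Q)"
proof -
  define P' where "P' j = min (P j) (Q j)" for j
  define Q' where "Q' j = max (P j) (Q j)" for j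
  have P': "selection s P'" and Q': "selection s Q'"
    using selection_min_max[OF P Q] unfolding P'_def Q'_def by auto
  have le: "total_cost pos_k s P' + total_cost (switch_pos pos_k1 pos_k1M i) s Q'
      \<le> total_cost pos_k s P + total_cost (switch_pos pos_k1 pos_k1M i) s Q"
    unfolding total_cost_add
  proof (rule sum_mono)
    fix j assume "j \<in> {..<s}"
    then have ab: "Q j < N" "P j < N" using P Q selection_bound by auto
    have "cost (switch_pos pos_k1 pos_k1M i j) (max (Q j) (P j))
        + cost (pos_k j) (min (Q j) (P j))
            \<le> cost (switch_pos pos_k1 pos_k1M i j) (Q j) + cost (pos_k j) (P j)"
      by (rule cost_exchange) (use ab in \<open>auto simp: switch_pos_def pos_k1_def pos_k_def pos_k1M_def\<close>)
    then show "cost (pos_k j) (P' j) + cost (switch_pos pos_k1 pos_k1M i j) (Q' j)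
        \<le> cost (pos_k j) (P j) + cost (switch_pos pos_k1 pos_k1M i j) (Q j)"
      by (simp add: P'_def Q'_def min.commute max.commute)
  qed
  have "\<And>j. j < s \<Longrightarrow> P' j \<le> Q' j" unfolding P'_def Q'_def by simp
  from exchange_k1_tight_ordered[OF P' Q' i this] le show ?thesis by (meson order_trans)
qed

lemma exchange_kM_le:
  assumes "selection (Suc s) p" "selection s q"
  shows "\<exists>P Q. selection (Suc s) P \<and> selection s Q \<and>
    total_cost (switch_pos pos_k pos_kM (Suc i)) (Suc s) P + total_cost pos_kM s Q
        \<le> total_cost pos_k (Suc s) p + total_cost (switch_pos pos_kM pos_k2M i) s q"
proof -
  define P where "P j = (case j of 0 \<Rightarrow> p 0 | Suc j' \<Rightarrow> max (p (Suc j')) (q j'))" for j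
  define Q where "Q j = min (p (Suc j)) (q j)" for j
  have pN: "\<And>a. a < Suc s \<Longrightarrow> p a < N" and qN: "\<And>a. a < s \<Longrightarrow> q a < N"
    using assms(1,2) selection_bound by auto
  have incP: "selection (Suc s) P"
    unfolding P_def by (rule selection_max_shift[OF assms(1,2)])
  have incQ: "selection s Q"
    unfolding Q_def by (rule selection_min_max(1)[OF selection_drop_first[OF assms(1)] assms(2)])
  have eq1: "total_cost (switch_pos pos_k pos_kM (Suc i)) (Suc s) P
      = cost (pos_k 0) (p 0) + (\<Sum>j<s. cost (switch_pos pos_k pos_kM (Suc i) (Suc j)) (max (p (Suc j)) (q j)))"
    unfolding total_cost_def sum.lessThan_Suc_shift by (simp add: P_def switch_pos_def)
  have eq2: "total_cost pos_k (Suc s) p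
      = cost (pos_k 0) (p 0) + (\<Sum>j<s. cost (pos_k (Suc j)) (p (Suc j)))"
    unfolding total_cost_def sum.lessThan_Suc_shift by simp
  have le: "(\<Sum>j<s. cost (switch_pos pos_k pos_kM (Suc i) (Suc j)) (max (p (Suc j)) (q j)))
      + total_cost pos_kM s Q
      \<le> (\<Sum>j<s. cost (pos_k (Suc j)) (p (Suc j))) + total_cost (switch_pos pos_kM pos_k2M i) s q"
    unfolding total_cost_def sum.distrib[symmetric]
  proof (rule sum_mono)
    fix j assume "j \<in> {..<s}"
    then have ab: "p (Suc j) < N" "q j < N" using pN qN by auto
    show "cost (switch_pos pos_k pos_kM (Suc i) (Suc j)) (max (p (Suc j)) (q j))
        + cost (pos_kM j) (Q j)
        \<le> cost (pos_k (Suc j)) (p (Suc j)) + cost (switch_pos pos_kM pos_k2M i j) (q j)"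
    proof (cases "j < i")
      case True
      have "cost (pos_k (Suc j)) (max (p (Suc j)) (q j))
          + cost (pos_kM j) (min (p (Suc j)) (q j))
              \<le> cost (pos_k (Suc j)) (p (Suc j)) + cost (pos_kM j) (q j)"
        by (rule cost_exchange) (use ab in \<open>auto simp: pos_kM_def pos_k_def\<close>)
      then show ?thesis using True by (simp add: switch_pos_def Q_def)
    next
      case False
      then show ?thesis using cost_cross_kM_k2M[OF ab, of j] by (simp add: switch_pos_def Q_def)
    qed
  qed
  show ?thesis
    by (rule exI[of _ P], rule exI[of _ Q]) (use incP incQ eq1 eq2 le in linarith)
qed

lemma exchange_kM_length_le:
  assumes "selection (Suc s) p" "selection s q" "i \<le> s"
  shows "\<exists>P Q. selection (Suc s) P \<and> selection s Q \<and>
    total_cost (switch_pos pos_k pos_kM i) (Suc s) P + total_cost pos_kM s Q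
        \<le> total_cost pos_kM (Suc s) p + total_cost (switch_pos pos_k pos_kM i) s q"
proof -
  define P where "P j = (if j < s then min (p j) (q j) else p s)" for j
  define Q where "Q j = max (p j) (q j)" for j
  have pN: "\<And>a. a < Suc s \<Longrightarrow> p a < N" and qN: "\<And>a. a < s \<Longrightarrow> q a < N"
    using assms(1,2) selection_bound by auto
  have incQ: "selection s Q"
    unfolding Q_def by (rule selection_min_max(2)[OF selection_le[OF assms(1)] assms(2)]) simp
  have incP: "selection (Suc s) P"
    unfolding P_def by (rule selection_min_extend[OF assms(1,2)])
  have eq1: "total_cost (switch_pos pos_k pos_kM i) (Suc s) P
      = (\<Sum>j<s. cost (switch_pos pos_k pos_kM i j) (min (p j) (q j))) + cost (pos_kM s) (p s)"
    unfolding total_cost_def using assms(3) by (simp add: P_def switch_pos_def)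
  have eq2: "total_cost pos_kM (Suc s) p = (\<Sum>j<s. cost (pos_kM j) (p j)) + cost (pos_kM s) (p s)"
    unfolding total_cost_def by simp
  have le: "(\<Sum>j<s. cost (switch_pos pos_k pos_kM i j) (min (p j) (q j))) + total_cost pos_kM s Q
      \<le> (\<Sum>j<s. cost (pos_kM j) (p j)) + total_cost (switch_pos pos_k pos_kM i) s q"
    unfolding total_cost_def sum.distrib[symmetric]
  proof (rule sum_mono)
    fix j assume "j \<in> {..<s}"
    then have ab: "p j < N" "q j < N" using pN qN by auto
    have "cost (pos_kM j) (max (p j) (q j))
        + cost (switch_pos pos_k pos_kM i j) (min (p j) (q j))
            \<le> cost (pos_kM j) (p j) + cost (switch_pos pos_k pos_kM i j) (q j)"
      by (rule cost_exchange) (use ab in \<open>auto simp: switch_pos_def pos_kM_def pos_k_def\<close>)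
    then show "cost (switch_pos pos_k pos_kM i j) (min (p j) (q j)) + cost (pos_kM j) (Q j)
        \<le> cost (pos_kM j) (p j) + cost (switch_pos pos_k pos_kM i j) (q j)"
      by (simp add: Q_def)
  qed
  show ?thesis
    by (rule exI[of _ P], rule exI[of _ Q]) (use incP incQ eq1 eq2 le in linarith)
qed

lemma exchange_kM_at_crossing:
  assumes P: "selection (Suc s) P" and Q: "selection s Q" and ia: "Suc i \<le> a" and as: "a \<le> s"
    and Pa: "\<And>j. j < Suc s \<Longrightarrow> P j < x \<longleftrightarrow> j < a" and Qa: "\<And>j. j < s \<Longrightarrow> Q j < x \<longleftrightarrow> j < a"
  shows "\<exists>p q. selection (Suc s) p \<and> selection s q \<and>
    total_cost pos_kM (Suc s) p + total_cost (switch_pos pos_k pos_kM (Suc i)) s q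
      \<le> total_cost (switch_pos pos_k pos_kM (Suc i)) (Suc s) P + total_cost pos_kM s Q"
proof -
  define p where "p j = (if j < a then Q j else P j)" for j
  define q where "q j = (if j < a then P j else Q j)" for j
  have P_below: "P j < x" if "j < a" for j using Pa[of j] that as by simp
  have P_above: "x \<le> P j" if "a \<le> j" "j < Suc s" for j using Pa[of j] that by simp
  have Q_below: "Q j < x" if "j < a" for j using Qa[of j] that as by simp
  have Q_above: "x \<le> Q j" if "a \<le> j" "j < s" for j using Qa[of j] that by simp
  have incp: "selection (Suc s) p"
  proof -
    have "selection (a + (Suc s - a)) (\<lambda>j. if j < a then Q j else P (j - a + a))"
      by (rule selection_splice[OF Q P _ _ Q_below P_above]) (use as in simp_all)
    moreover have "(\<lambda>j. if j < a then Q j else P (j - a + a)) = p" by (auto simp: p_def)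
    ultimately show ?thesis using as by simp
  qed
  have incq: "selection s q"
  proof -
    have "selection (a + (s - a)) (\<lambda>j. if j < a then P j else Q (j - a + a))"
      by (rule selection_splice[OF P Q _ _ P_below Q_above]) (use as in simp_all)
    moreover have "(\<lambda>j. if j < a then P j else Q (j - a + a)) = q" by (auto simp: q_def)
    ultimately show ?thesis using as by simp
  qed
  let ?G = "switch_pos pos_k pos_kM (Suc i)"
  have e1: "total_cost pos_kM (Suc s) p
      = (\<Sum>j<a. cost (pos_kM j) (Q j)) + (\<Sum>j\<in>{a..<Suc s}. cost (?G j) (P j))"
  proof -
    have "total_cost pos_kM (Suc s) p
        = (\<Sum>j<a. cost (pos_kM j) (p j)) + (\<Sum>j\<in>{a..<Suc s}. cost (pos_kM j) (p j))"
      unfolding total_cost_def by (rule sum_lessThan_split) (use as in simp)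
    moreover have "(\<Sum>j<a. cost (pos_kM j) (p j)) = (\<Sum>j<a. cost (pos_kM j) (Q j))"
      by (rule sum.cong) (auto simp: p_def)
    moreover have "(\<Sum>j\<in>{a..<Suc s}. cost (pos_kM j) (p j)) = (\<Sum>j\<in>{a..<Suc s}. cost (?G j) (P j))"
      by (rule sum.cong) (use ia in \<open>auto simp: p_def switch_pos_def\<close>)
    ultimately show ?thesis by simp
  qed
  have e2: "total_cost ?G s q = (\<Sum>j<a. cost (?G j) (P j)) + (\<Sum>j\<in>{a..<s}. cost (pos_kM j) (Q j))"
  proof -
    have "total_cost ?G s q = (\<Sum>j<a. cost (?G j) (q j)) + (\<Sum>j\<in>{a..<s}. cost (?G j) (q j))"
      unfolding total_cost_def by (rule sum_lessThan_split) (use as in simp)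
    moreover have "(\<Sum>j<a. cost (?G j) (q j)) = (\<Sum>j<a. cost (?G j) (P j))"
      by (rule sum.cong) (auto simp: q_def)
    moreover have "(\<Sum>j\<in>{a..<s}. cost (?G j) (q j)) = (\<Sum>j\<in>{a..<s}. cost (pos_kM j) (Q j))"
      by (rule sum.cong) (use ia in \<open>auto simp: q_def switch_pos_def\<close>)
    ultimately show ?thesis by simp
  qed
  have e3: "total_cost ?G (Suc s) P
      = (\<Sum>j<a. cost (?G j) (P j)) + (\<Sum>j\<in>{a..<Suc s}. cost (?G j) (P j))"
    unfolding total_cost_def by (rule sum_lessThan_split) (use as in simp)
  have e4: "total_cost pos_kM s Q
      = (\<Sum>j<a. cost (pos_kM j) (Q j)) + (\<Sum>j\<in>{a..<s}. cost (pos_kM j) (Q j))"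
    unfolding total_cost_def by (rule sum_lessThan_split) (use as in simp)
  have "total_cost pos_kM (Suc s) p + total_cost ?G s q
      \<le> total_cost ?G (Suc s) P + total_cost pos_kM s Q"
    using e1 e2 e3 e4 by simp
  then show ?thesis using incp incq by blast
qed

text \<open>The same dichotomy for lengths \<open>s + 1\<close> and \<open>s\<close>: either the counts agree at some
  threshold exceeding row \<open>i\<close> of \<open>Q\<close>, or \<open>P (j + 1) \<le> Q j\<close> from row \<open>i\<close> on.\<close>

lemma exchange_kM_tight_ordered:
  assumes P: "selection (Suc s) P" and Q: "selection s Q" and i: "Suc i \<le> s"
    and PQ: "\<And>j. j < s \<Longrightarrow> P j \<le> Q j"
  shows "(\<exists>p q. selection (Suc s) p \<and> selection s q \<and>
      total_cost pos_k (Suc s) p + total_cost (switch_pos pos_kM pos_k2M i) s q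
        \<le> total_cost (switch_pos pos_k pos_kM (Suc i)) (Suc s) P + total_cost pos_kM s Q)
    \<or> (\<exists>p q. selection (Suc s) p \<and> selection s q \<and>
      total_cost pos_kM (Suc s) p + total_cost (switch_pos pos_k pos_kM (Suc i)) s q
        \<le> total_cost (switch_pos pos_k pos_kM (Suc i)) (Suc s) P + total_cost pos_kM s Q)"
proof -
  define x0 where "x0 = Suc (Q i)"
  have QN: "\<And>j. j < s \<Longrightarrow> Q j < N" using Q selection_bound by auto
  have cQP: "count_below s Q x \<le> count_below (Suc s) P x" for x
    by (rule count_below_le_of_le[OF P Q _ PQ]) simp
  have cQx0: "Suc i \<le> count_below s Q x" if "x0 \<le> x" for x
    using less_count_below_iff[OF Q, of i x] i that unfolding x0_def by simp
  show ?thesis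
  proof (cases "\<exists>x. x0 \<le> x \<and> x \<le> N \<and> count_below (Suc s) P x = count_below s Q x")
    case True
    then obtain x where x: "x0 \<le> x" "count_below (Suc s) P x = count_below s Q x" by blast
    define a where "a = count_below s Q x"
    have "a \<le> s" using count_below_le[of s Q x] a_def by simp
    moreover have "P j < x \<longleftrightarrow> j < a" if "j < Suc s" for j
      using less_count_below_iff[OF P, of j x] x(2) a_def that by simp
    moreover have "\<And>j. j < s \<Longrightarrow> Q j < x \<longleftrightarrow> j < a" using less_count_below_iff[OF Q] a_def by auto
    ultimately show ?thesis using exchange_kM_at_crossing[OF P Q cQx0[OF x(1)]] a_def by blast
  next
    case False
    have d1: "Suc (count_below s Q x) \<le> count_below (Suc s) P x" if "x0 \<le> x" "x \<le> N" for x
      using cQP[of x] False that by (metis le_neq_implies_less Suc_leI)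
    have PQ2: "P (Suc j) \<le> Q j" if "i \<le> j" "j < s" for j
    proof -
      have "Q i \<le> Q j" using selection_mono[OF Q] that by simp
      then have "x0 \<le> Suc (Q j)" unfolding x0_def by simp
      moreover have "Suc (Q j) \<le> N" using QN[of j] that by simp
      ultimately have "Suc (Suc j) \<le> count_below (Suc s) P (Suc (Q j))"
        using d1 count_below_Suc_at[OF Q that(2)] by fastforce
      then have "P (Suc j) < Suc (Q j)"
        using less_count_below_iff[OF P, of "Suc j" "Suc (Q j)"] by simp
      then show ?thesis by simp
    qed
    have c1: "total_cost (switch_pos pos_k pos_kM (Suc i)) (Suc s) P
        = total_cost pos_k (Suc s) P + (\<Sum>j\<in>{Suc i..<Suc s}. Z (P j))"
      by (rule total_cost_switch) (rule cost_kM)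
    have c2: "total_cost (switch_pos pos_kM pos_k2M i) s Q
        = total_cost pos_kM s Q + (\<Sum>j\<in>{i..<s}. Z (Q j))"
      by (rule total_cost_switch) (rule cost_k2M)
    have c3: "(\<Sum>j\<in>{Suc i..<Suc s}. Z (P j)) = (\<Sum>j\<in>{i..<s}. Z (P (Suc j)))"
      using sum.shift_bounds_nat_ivl[of "\<lambda>j. Z (P j)" i 1 s] by simp
    have c4: "(\<Sum>j\<in>{i..<s}. Z (Q j)) \<le> (\<Sum>j\<in>{i..<s}. Z (P (Suc j)))"
    proof (rule sum_mono)
      fix j assume "j \<in> {i..<s}"
      then show "Z (Q j) \<le> Z (P (Suc j))" using PQ2[of j] QN[of j] Z_antimono by auto
    qed
    have "total_cost pos_k (Suc s) P + total_cost (switch_pos pos_kM pos_k2M i) s Q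
        \<le> total_cost (switch_pos pos_k pos_kM (Suc i)) (Suc s) P + total_cost pos_kM s Q"
      using c1 c2 c3 c4 by simp
    then show ?thesis using P Q by blast
  qed
qed

lemma exchange_kM_tight:
  assumes P: "selection (Suc s) P" and Q: "selection s Q" and i: "Suc i \<le> s"
  shows "(\<exists>p q. selection (Suc s) p \<and> selection s q
      \<and> total_cost pos_k (Suc s) p + total_cost (switch_pos pos_kM pos_k2M i) s q
          \<le> total_cost (switch_pos pos_k pos_kM (Suc i)) (Suc s) P + total_cost pos_kM s Q)
    \<or> (\<exists>p q. selection (Suc s) p \<and> selection s q \<and>
          total_cost pos_kM (Suc s) p + total_cost (switch_pos pos_k pos_kM (Suc i)) s q
              \<le> total_cost (switch_pos pos_k pos_kM (Suc i)) (Suc s) P + total_cost pos_kM s Q)"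
proof -
  let ?G = "switch_pos pos_k pos_kM (Suc i)"
  define P' where "P' j = (if j < s then min (P j) (Q j) else P s)" for j
  define Q' where "Q' j = max (P j) (Q j)" for j
  have pN: "\<And>a. a < Suc s \<Longrightarrow> P a < N" and qN: "\<And>a. a < s \<Longrightarrow> Q a < N"
    using P Q selection_bound by auto
  have Q': "selection s Q'"
    unfolding Q'_def by (rule selection_min_max(2)[OF selection_le[OF P] Q]) simp
  have P': "selection (Suc s) P'"
    unfolding P'_def by (rule selection_min_extend[OF P Q])
  have le: "total_cost ?G (Suc s) P' + total_cost pos_kM s Q'
      \<le> total_cost ?G (Suc s) P + total_cost pos_kM s Q"
  proof -
    have a1: "total_cost ?G (Suc s) P' = (\<Sum>j<s. cost (?G j) (min (P j) (Q j))) + cost (?G s) (P s)"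
      unfolding total_cost_def by (simp add: P'_def)
    have a2: "total_cost ?G (Suc s) P = (\<Sum>j<s. cost (?G j) (P j)) + cost (?G s) (P s)"
      unfolding total_cost_def by simp
    have a3: "(\<Sum>j<s. cost (?G j) (min (P j) (Q j))) + total_cost pos_kM s Q'
        \<le> (\<Sum>j<s. cost (?G j) (P j)) + total_cost pos_kM s Q"
      unfolding total_cost_def sum.distrib[symmetric]
    proof (rule sum_mono)
      fix j assume "j \<in> {..<s}"
      then have ab: "Q j < N" "P j < N" using pN qN by auto
      have "cost (pos_kM j) (max (Q j) (P j)) + cost (?G j) (min (Q j) (P j))
          \<le> cost (pos_kM j) (Q j) + cost (?G j) (P j)"
        by (rule cost_exchange) (use ab in \<open>auto simp: switch_pos_def pos_kM_def pos_k_def\<close>)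
      then show "cost (?G j) (min (P j) (Q j)) + cost (pos_kM j) (Q' j)
          \<le> cost (?G j) (P j) + cost (pos_kM j) (Q j)"
        by (simp add: Q'_def min.commute max.commute)
    qed
    show ?thesis using a1 a2 a3 by simp
  qed
  have "\<And>j. j < s \<Longrightarrow> P' j \<le> Q' j" unfolding P'_def Q'_def by simp
  from exchange_kM_tight_ordered[OF P' Q' i this] le show ?thesis by (meson order_trans)
qed

section \<open>Minimal costs\<close>

definition min_cost :: "(nat \<Rightarrow> nat \<times> nat) \<Rightarrow> nat \<Rightarrow> real" where
  "min_cost pos n = Min ((\<lambda>rs. total_cost pos n (nth rs)) ` incr_lists N n)"

definition capped_sum :: "real \<Rightarrow> nat \<Rightarrow> (nat \<Rightarrow> nat) \<Rightarrow> real" where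
  "capped_sum Sv n f = (\<Sum>j<n. min (Z (f j)) Sv)"

definition min_capped_cost :: "real \<Rightarrow> (nat \<Rightarrow> nat \<times> nat) \<Rightarrow> nat \<Rightarrow> real" where
  "min_capped_cost Sv pos n = Min ((\<lambda>rs. total_cost pos n (nth rs)
      + capped_sum Sv n (nth rs)) ` incr_lists N n)"

lemma finite_incr_lists: "finite (incr_lists N n)"
proof -
  have "incr_lists N n \<subseteq> {xs. set xs \<subseteq> {..<N} \<and> length xs = n}"
    unfolding incr_lists_def by auto
  moreover have "finite {xs. set xs \<subseteq> {..<N} \<and> length xs = n}"
    by (rule finite_lists_length_eq) simp
  ultimately show ?thesis by (rule finite_subset)
qed

lemma incr_lists_selection: "rs \<in> incr_lists N n \<Longrightarrow> selection n (nth rs)"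
  unfolding incr_lists_def selection_def by (auto simp: sorted_wrt_iff_nth_less)

lemma selection_in_incr_lists: "selection n f \<Longrightarrow> map f [0..<n] \<in> incr_lists N n"
  unfolding incr_lists_def selection_def by (auto simp: sorted_wrt_iff_nth_less)

lemma incr_lists_nonempty: "n \<le> N \<Longrightarrow> incr_lists N n \<noteq> {}"
proof -
  assume "n \<le> N"
  then have "selection n (\<lambda>j. j)" unfolding selection_def by auto
  then show ?thesis using selection_in_incr_lists by blast
qed

lemma Min_selection_le:
  assumes "selection n f" "\<And>f'. (\<And>j. j < n \<Longrightarrow> f' j = f j) \<Longrightarrow> g f' = g f"
  shows "Min ((\<lambda>rs. g (nth rs)) ` incr_lists N n) \<le> g f"
proof -
  have "map f [0..<n] \<in> incr_lists N n" using selection_in_incr_lists assms(1) by blast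
  moreover have "g (nth (map f [0..<n])) = g f" by (rule assms(2)) simp
  ultimately show ?thesis using finite_incr_lists
    by (metis (no_types, lifting) Min_le finite_imageI image_eqI)
qed

lemma Min_selection_attained:
  assumes "n \<le> N"
  shows "\<exists>f. selection n f \<and> Min ((\<lambda>rs. g (nth rs)) ` incr_lists N n) = g f"
proof -
  have "Min ((\<lambda>rs. g (nth rs)) ` incr_lists N n) \<in> (\<lambda>rs. g (nth rs)) ` incr_lists N n"
    using finite_incr_lists incr_lists_nonempty[OF assms] by (intro Min_in) auto
  then obtain rs where "rs \<in> incr_lists N n" "Min ((\<lambda>rs. g (nth rs)) ` incr_lists N n) = g (nth rs)"
    by auto
  then show ?thesis using incr_lists_selection by blast
qed

lemma total_cost_cong: "(\<And>j. j < n \<Longrightarrow> f' j = f j) \<Longrightarrow> total_cost pos n f' = total_cost pos n f"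
  unfolding total_cost_def by (rule sum.cong) auto

lemma capped_sum_cong: "(\<And>j. j < n \<Longrightarrow> f' j = f j) \<Longrightarrow> capped_sum Sv n f' = capped_sum Sv n f"
  unfolding capped_sum_def by (rule sum.cong) auto

lemma min_cost_le: "selection n f \<Longrightarrow> min_cost pos n \<le> total_cost pos n f"
  unfolding min_cost_def by (rule Min_selection_le) (auto intro: total_cost_cong)

lemma min_cost_attained: "n \<le> N \<Longrightarrow> \<exists>f. selection n f \<and> min_cost pos n = total_cost pos n f"
  unfolding min_cost_def by (rule Min_selection_attained)

lemma min_capped_cost_le:
  assumes "selection n f"
  shows "min_capped_cost Sv pos n \<le> total_cost pos n f + capped_sum Sv n f"
  unfolding min_capped_cost_def
proof (rule Min_selection_le[where g="\<lambda>f. total_cost pos n f + capped_sum Sv n f", OF assms])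
  fix f' assume h: "\<And>j. j < n \<Longrightarrow> f' j = f j"
  show "total_cost pos n f' + capped_sum Sv n f' = total_cost pos n f + capped_sum Sv n f"
    using total_cost_cong[OF h] capped_sum_cong[OF h] by simp
qed

lemma min_capped_cost_attained:
  "n \<le> N \<Longrightarrow> \<exists>f. selection n f \<and> min_capped_cost Sv pos n = total_cost pos n f + capped_sum Sv n f"
  unfolding min_capped_cost_def
  by (rule Min_selection_attained[where g="\<lambda>f. total_cost pos n f + capped_sum Sv n f"])

lemma capped_sum_le:
  assumes "i \<le> n"
  shows "capped_sum Sv n f \<le> real i * Sv + (\<Sum>j\<in>{i..<n}. Z (f j))"
proof -
  have "capped_sum Sv n f = (\<Sum>j<i. min (Z (f j)) Sv) + (\<Sum>j\<in>{i..<n}. min (Z (f j)) Sv)"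
    unfolding capped_sum_def by (rule sum_lessThan_split[OF assms])
  moreover have "(\<Sum>j<i. min (Z (f j)) Sv) \<le> (\<Sum>j<i. Sv)" by (rule sum_mono) simp
  moreover have "(\<Sum>j\<in>{i..<n}. min (Z (f j)) Sv) \<le> (\<Sum>j\<in>{i..<n}. Z (f j))" by (rule sum_mono) simp
  ultimately show ?thesis by simp
qed

lemma capped_sum_threshold:
  assumes "selection n f"
  shows "\<exists>i\<le>n. capped_sum Sv n f = real i * Sv + (\<Sum>j\<in>{i..<n}. Z (f j))"
proof -
  let ?A = "{j. j < n \<and> Sv < Z (f j)}"
  have A: "?A = {..<card ?A}"
  proof (rule finite_downclosed_eq_lessThan)
    show "finite ?A" by simp
    fix j j' assume jA: "j \<in> ?A" and "j' < j"
    then have "f j' \<le> f j" using selection_mono[OF assms] by auto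
    then have "Z (f j) \<le> Z (f j')" using Z_antimono selection_bound[OF assms] jA by auto
    then show "j' \<in> ?A" using jA \<open>j' < j\<close> by auto
  qed
  define i where "i = card ?A"
  have iff: "\<And>j. j < n \<Longrightarrow> Sv < Z (f j) \<longleftrightarrow> j < i"
  proof -
    fix j assume "j < n"
    have "j \<in> ?A \<longleftrightarrow> j < i" using A i_def by blast
    then show "Sv < Z (f j) \<longleftrightarrow> j < i" using \<open>j < n\<close> by simp
  qed
  have "i \<le> n" unfolding i_def by (rule card_mono[of "{..<n}", simplified]) auto
  have "capped_sum Sv n f = (\<Sum>j<i. min (Z (f j)) Sv) + (\<Sum>j\<in>{i..<n}. min (Z (f j)) Sv)"
    unfolding capped_sum_def by (rule sum_lessThan_split[OF \<open>i \<le> n\<close>])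
  also have "(\<Sum>j<i. min (Z (f j)) Sv) = (\<Sum>j<i. Sv)"
    by (rule sum.cong) (use iff \<open>i \<le> n\<close> in auto)
  also have "(\<Sum>j\<in>{i..<n}. min (Z (f j)) Sv) = (\<Sum>j\<in>{i..<n}. Z (f j))"
  proof (rule sum.cong)
    fix x assume "x \<in> {i..<n}"
    then have "\<not> Sv < Z (f x)" using iff[of x] by auto
    then show "min (Z (f x)) Sv = Z (f x)" by simp
  qed simp
  finally show ?thesis using \<open>i \<le> n\<close> by auto
qed

lemma min_capped_cost_le_switch:
  assumes "selection n f" "i \<le> n" "\<And>j r. cost (b' j) r = cost (b j) r + Z r"
  shows "min_capped_cost Sv b n \<le> real i * Sv + total_cost (switch_pos b b' i) n f"
  using min_capped_cost_le[OF assms(1), where Sv=Sv and pos=b] capped_sum_le[OF assms(2), where Sv=Sv and f=f]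
    total_cost_switch[where b=b and b'=b', OF assms(3), where i=i and n=n and f=f] by simp

lemma min_capped_cost_switch_attained:
  assumes "n \<le> N" "\<And>j r. cost (b' j) r = cost (b j) r + Z r"
  shows "\<exists>f i. selection n f \<and> i \<le> n \<and>
    min_capped_cost Sv b n = real i * Sv + total_cost (switch_pos b b' i) n f"
proof -
  obtain f where f: "selection n f" "min_capped_cost Sv b n = total_cost b n f + capped_sum Sv n f"
    using min_capped_cost_attained[OF assms(1)] by blast
  obtain i where "i \<le> n" "capped_sum Sv n f = real i * Sv + (\<Sum>j\<in>{i..<n}. Z (f j))"
    using capped_sum_threshold[OF f(1)] by blast
  moreover have "total_cost (switch_pos b b' i) n f = total_cost b n f + (\<Sum>j\<in>{i..<n}. Z (f j))"
    by (rule total_cost_switch[where b=b and b'=b', OF assms(2)])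
  ultimately have "min_capped_cost Sv b n = real i * Sv + total_cost (switch_pos b b' i) n f"
    using f by simp
  then show ?thesis using f(1) \<open>i \<le> n\<close> by blast
qed

lemma min_costs_k1_le:
  assumes "s \<le> N"
  shows "min_cost pos_k s + min_capped_cost Sv pos_k1 s
      \<le> min_cost pos_k1 s + min_capped_cost Sv pos_k s"
proof -
  obtain p where p: "selection s p" "min_cost pos_k1 s = total_cost pos_k1 s p"
    using min_cost_attained[OF assms] by blast
  obtain q i where q: "selection s q" "i \<le> s"
      "min_capped_cost Sv pos_k s = real i * Sv + total_cost (switch_pos pos_k pos_kM i) s q"
    using min_capped_cost_switch_attained[where b=pos_k and b'=pos_kM, OF assms cost_kM] by blast
  obtain P Q where PQ: "selection s P" "selection s Q"
      "total_cost pos_k s P + total_cost (switch_pos pos_k1 pos_k1M i) s Q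
        \<le> total_cost pos_k1 s p + total_cost (switch_pos pos_k pos_kM i) s q"
    using exchange_k1_le[OF p(1) q(1)] by blast
  have "min_cost pos_k s \<le> total_cost pos_k s P" by (rule min_cost_le[OF PQ(1)])
  moreover have "min_capped_cost Sv pos_k1 s
      \<le> real i * Sv + total_cost (switch_pos pos_k1 pos_k1M i) s Q"
    by (rule min_capped_cost_le_switch[where b=pos_k1 and b'=pos_k1M, OF PQ(2) q(2) cost_k1M])
  ultimately show ?thesis using p q PQ by simp
qed

lemma min_costs_k1_le_shift:
  assumes "1 \<le> s" "Suc s \<le> N"
  shows "min_cost pos_k s + min_capped_cost Sv pos_k1 s
    \<le> min_cost pos_k (Suc s) + min_capped_cost Sv pos_k1 (s - 1)"
proof -
  obtain m where m: "s = Suc m" using assms(1) by (cases s) auto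
  obtain p where p: "selection (Suc (Suc m)) p"
      "min_cost pos_k (Suc s) = total_cost pos_k (Suc (Suc m)) p"
    using min_cost_attained[OF assms(2)] m by blast
  obtain q i where q: "selection m q" "i \<le> m"
      "min_capped_cost Sv pos_k1 m = real i * Sv + total_cost (switch_pos pos_k1 pos_k1M i) m q"
    using min_capped_cost_switch_attained[of m pos_k1M pos_k1 Sv] cost_k1M assms m by fastforce
  obtain P Q where PQ: "selection (Suc m) P" "selection (Suc m) Q"
      "total_cost pos_k (Suc m) P + total_cost (switch_pos pos_k1 pos_k1M i) (Suc m) Q
        \<le> total_cost pos_k (Suc (Suc m)) p + total_cost (switch_pos pos_k1 pos_k1M i) m q"
    using exchange_k1_length_le[OF p(1) q(1,2)] by blast
  have "min_cost pos_k s \<le> total_cost pos_k (Suc m) P" using min_cost_le[OF PQ(1)] m by simp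
  moreover have "min_capped_cost Sv pos_k1 s
      \<le> real i * Sv + total_cost (switch_pos pos_k1 pos_k1M i) (Suc m) Q"
    using min_capped_cost_le_switch[where b=pos_k1 and b'=pos_k1M, OF PQ(2) _ cost_k1M, of i] q(2) m by simp
  ultimately show ?thesis using p q PQ m by simp
qed

lemma min_costs_k1_tight:
  assumes "s \<le> N"
  shows "min_cost pos_k1 s + min_capped_cost Sv pos_k s
      \<le> min_cost pos_k s + min_capped_cost Sv pos_k1 s \<or>
    (Suc s \<le> N \<and> min_cost pos_k (Suc s) + min_capped_cost Sv pos_k1 (s - 1)
        \<le> min_cost pos_k s + min_capped_cost Sv pos_k1 s)"
proof -
  obtain P where P: "selection s P" "min_cost pos_k s = total_cost pos_k s P"
    using min_cost_attained[OF assms] by blast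
  obtain Q i where Q: "selection s Q" "i \<le> s"
      "min_capped_cost Sv pos_k1 s = real i * Sv + total_cost (switch_pos pos_k1 pos_k1M i) s Q"
    using min_capped_cost_switch_attained[where b=pos_k1 and b'=pos_k1M, OF assms cost_k1M] by blast
  show ?thesis
  proof (cases "i = s")
    case True
    have "min_cost pos_k1 s \<le> total_cost pos_k1 s Q" by (rule min_cost_le[OF Q(1)])
    moreover have "min_capped_cost Sv pos_k s
        \<le> real s * Sv + total_cost (switch_pos pos_k pos_kM s) s P"
      by (rule min_capped_cost_le_switch[where b=pos_k and b'=pos_kM, OF P(1) _ cost_kM]) simp
    ultimately show ?thesis
      using P Q True total_cost_switch_full[of pos_k pos_kM s P] total_cost_switch_full[of pos_k1 pos_k1M s Q]
      by simp
  next
    case False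
    then have "i < s" using Q(2) by simp
    from exchange_k1_tight[OF P(1) Q(1) this] show ?thesis
    proof (elim disjE exE conjE)
      fix p q assume pq: "selection s p" "selection s q"
          "total_cost pos_k1 s p + total_cost (switch_pos pos_k pos_kM i) s q
          \<le> total_cost pos_k s P + total_cost (switch_pos pos_k1 pos_k1M i) s Q"
      have "min_cost pos_k1 s \<le> total_cost pos_k1 s p" by (rule min_cost_le[OF pq(1)])
      moreover have "min_capped_cost Sv pos_k s
          \<le> real i * Sv + total_cost (switch_pos pos_k pos_kM i) s q"
        by (rule min_capped_cost_le_switch[where b=pos_k and b'=pos_kM, OF pq(2) Q(2) cost_kM])
      ultimately show ?thesis using P Q pq by simp
    next
      fix p q assume pq: "selection (Suc s) p" "selection (s - 1) q"
          "total_cost pos_k (Suc s) p + total_cost (switch_pos pos_k1 pos_k1M i) (s - 1) q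
          \<le> total_cost pos_k s P + total_cost (switch_pos pos_k1 pos_k1M i) s Q"
      have "Suc s \<le> N" by (rule selection_length_le[OF pq(1)])
      moreover have "min_cost pos_k (Suc s) \<le> total_cost pos_k (Suc s) p"
        by (rule min_cost_le[OF pq(1)])
      moreover have "min_capped_cost Sv pos_k1 (s - 1)
          \<le> real i * Sv + total_cost (switch_pos pos_k1 pos_k1M i) (s - 1) q"
        by (rule min_capped_cost_le_switch[where b=pos_k1 and b'=pos_k1M, OF pq(2) _ cost_k1M]) (use \<open>i < s\<close> in simp)
      ultimately show ?thesis using P Q pq by simp
    qed
  qed
qed

lemma min_costs_kM_le:
  assumes "Suc s \<le> N"
  shows "min_capped_cost Sv pos_k (Suc s) + min_cost pos_kM s
    \<le> min_cost pos_k (Suc s) + min_capped_cost Sv pos_kM s + Sv"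
proof -
  obtain p where p: "selection (Suc s) p" "min_cost pos_k (Suc s) = total_cost pos_k (Suc s) p"
    using min_cost_attained[OF assms] by blast
  obtain q i where q: "selection s q" "i \<le> s"
      "min_capped_cost Sv pos_kM s = real i * Sv + total_cost (switch_pos pos_kM pos_k2M i) s q"
    using min_capped_cost_switch_attained[where b=pos_kM and b'=pos_k2M, OF _ cost_k2M] assms
    by (meson Suc_leD)
  obtain P Q where PQ: "selection (Suc s) P" "selection s Q"
      "total_cost (switch_pos pos_k pos_kM (Suc i)) (Suc s) P + total_cost pos_kM s Q
        \<le> total_cost pos_k (Suc s) p + total_cost (switch_pos pos_kM pos_k2M i) s q"
    using exchange_kM_le[OF p(1) q(1)] by blast
  have "min_capped_cost Sv pos_k (Suc s)
      \<le> real (Suc i) * Sv + total_cost (switch_pos pos_k pos_kM (Suc i)) (Suc s) P"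
    by (rule min_capped_cost_le_switch[where b=pos_k and b'=pos_kM, OF PQ(1) _ cost_kM]) (use q(2) in simp)
  moreover have "min_cost pos_kM s \<le> total_cost pos_kM s Q" by (rule min_cost_le[OF PQ(2)])
  ultimately show ?thesis using p q PQ by (simp add: algebra_simps)
qed

lemma min_costs_kM_le_shift:
  assumes "Suc s \<le> N"
  shows "min_capped_cost Sv pos_k (Suc s) + min_cost pos_kM s
    \<le> min_cost pos_kM (Suc s) + min_capped_cost Sv pos_k s"
proof -
  obtain p where p: "selection (Suc s) p" "min_cost pos_kM (Suc s) = total_cost pos_kM (Suc s) p"
    using min_cost_attained[OF assms] by blast
  obtain q i where q: "selection s q" "i \<le> s"
      "min_capped_cost Sv pos_k s = real i * Sv + total_cost (switch_pos pos_k pos_kM i) s q"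
    using min_capped_cost_switch_attained[where b=pos_k and b'=pos_kM, OF _ cost_kM] assms
    by (meson Suc_leD)
  obtain P Q where PQ: "selection (Suc s) P" "selection s Q"
      "total_cost (switch_pos pos_k pos_kM i) (Suc s) P + total_cost pos_kM s Q
        \<le> total_cost pos_kM (Suc s) p + total_cost (switch_pos pos_k pos_kM i) s q"
    using exchange_kM_length_le[OF p(1) q(1,2)] by blast
  have "min_capped_cost Sv pos_k (Suc s)
      \<le> real i * Sv + total_cost (switch_pos pos_k pos_kM i) (Suc s) P"
    by (rule min_capped_cost_le_switch[where b=pos_k and b'=pos_kM, OF PQ(1) _ cost_kM]) (use q(2) in simp)
  moreover have "min_cost pos_kM s \<le> total_cost pos_kM s Q" by (rule min_cost_le[OF PQ(2)])
  ultimately show ?thesis using p q PQ by simp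
qed

lemma min_costs_kM_tight:
  assumes "Suc s \<le> N"
  shows "min_cost pos_k (Suc s) + min_capped_cost Sv pos_kM s + Sv
      \<le> min_capped_cost Sv pos_k (Suc s) + min_cost pos_kM s \<or>
    min_cost pos_kM (Suc s) + min_capped_cost Sv pos_k s
      \<le> min_capped_cost Sv pos_k (Suc s) + min_cost pos_kM s"
proof -
  obtain P i where P: "selection (Suc s) P" "i \<le> Suc s"
      "min_capped_cost Sv pos_k (Suc s)
          = real i * Sv + total_cost (switch_pos pos_k pos_kM i) (Suc s) P"
    using min_capped_cost_switch_attained[where b=pos_k and b'=pos_kM, OF assms cost_kM] by blast
  obtain Q where Q: "selection s Q" "min_cost pos_kM s = total_cost pos_kM s Q"
    using min_cost_attained[of s pos_kM] assms by auto
  consider "i = 0" | "i = Suc s" | i' where "i = Suc i'" "Suc i' \<le> s"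
    using P(2) by (cases i; cases "i = Suc s") auto
  then show ?thesis
  proof cases
    case 1
    have "min_cost pos_kM (Suc s) \<le> total_cost pos_kM (Suc s) P" by (rule min_cost_le[OF P(1)])
    moreover have "min_capped_cost Sv pos_k s
        \<le> real 0 * Sv + total_cost (switch_pos pos_k pos_kM 0) s Q"
      by (rule min_capped_cost_le_switch[where b=pos_k and b'=pos_kM, OF Q(1) _ cost_kM]) simp
    ultimately show ?thesis
      using P Q 1 total_cost_switch_zero[of pos_k pos_kM s Q] total_cost_switch_zero[of pos_k pos_kM "Suc s" P]
      by simp
  next
    case 2
    have "min_cost pos_k (Suc s) \<le> total_cost pos_k (Suc s) P" by (rule min_cost_le[OF P(1)])
    moreover have "min_capped_cost Sv pos_kM s
        \<le> real s * Sv + total_cost (switch_pos pos_kM pos_k2M s) s Q"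
      by (rule min_capped_cost_le_switch[where b=pos_kM and b'=pos_k2M, OF Q(1) _ cost_k2M]) simp
    ultimately show ?thesis
      using P Q 2 total_cost_switch_full[of pos_k pos_kM "Suc s" P] total_cost_switch_full[of pos_kM pos_k2M s Q]
      by (simp add: algebra_simps)
  next
    case 3
    from exchange_kM_tight[OF P(1) Q(1) 3(2)] show ?thesis
    proof (elim disjE exE conjE)
      fix p q assume pq: "selection (Suc s) p" "selection s q"
          "total_cost pos_k (Suc s) p + total_cost (switch_pos pos_kM pos_k2M i') s q
          \<le> total_cost (switch_pos pos_k pos_kM (Suc i')) (Suc s) P + total_cost pos_kM s Q"
      have "min_cost pos_k (Suc s) \<le> total_cost pos_k (Suc s) p" by (rule min_cost_le[OF pq(1)])
      moreover have "min_capped_cost Sv pos_kM s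
          \<le> real i' * Sv + total_cost (switch_pos pos_kM pos_k2M i') s q"
        by (rule min_capped_cost_le_switch[where b=pos_kM and b'=pos_k2M, OF pq(2) _ cost_k2M]) (use 3 in simp)
      ultimately show ?thesis using P Q pq 3 by (simp add: algebra_simps)
    next
      fix p q assume pq: "selection (Suc s) p" "selection s q"
          "total_cost pos_kM (Suc s) p + total_cost (switch_pos pos_k pos_kM (Suc i')) s q
          \<le> total_cost (switch_pos pos_k pos_kM (Suc i')) (Suc s) P + total_cost pos_kM s Q"
      have "min_cost pos_kM (Suc s) \<le> total_cost pos_kM (Suc s) p" by (rule min_cost_le[OF pq(1)])
      moreover have "min_capped_cost Sv pos_k s
          \<le> real (Suc i') * Sv + total_cost (switch_pos pos_k pos_kM (Suc i')) s q"
        by (rule min_capped_cost_le_switch[where b=pos_k and b'=pos_kM, OF pq(2) 3(2) cost_kM])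
      ultimately show ?thesis using P Q pq 3 by simp
    qed
  qed
qed

end

section \<open>The ultradiscrete hungry Toda lattice\<close>

definition base_weight :: "(int \<Rightarrow> nat \<Rightarrow> real) \<Rightarrow> (nat \<Rightarrow> real) \<Rightarrow> (int \<Rightarrow> real) \<Rightarrow> nat \<Rightarrow>
    int \<Rightarrow> int \<Rightarrow> nat \<Rightarrow> nat \<Rightarrow> real" where
  "base_weight W Z S M k t \<rho> r
      = W (k + int \<rho>) r + real_of_int (k + int \<rho>) / real M * Z r + sumS S t (Z r)"

lemma incr_lists_0: "incr_lists N 0 = {[]}"
  unfolding incr_lists_def by auto

lemma T_beyond_N [simp]: "N < n \<Longrightarrow> T W Z S M N k t n = \<infinity>"
  unfolding T_def by auto

lemma sumS_Suc: "sumS S (t + 1) x = sumS S t x + min x (S t)"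
proof -
  consider "0 \<le> t" | "t = -1" | "t < -1" by linarith
  then show ?thesis
  proof cases
    case 1
    then have "{0..<t + 1} = insert t {0..<t}" by auto
    with 1 show ?thesis unfolding sumS_def by (simp add: add.commute)
  next
    case 2
    moreover have "{-1..<0::int} = {-1}" by auto
    ultimately show ?thesis unfolding sumS_def by simp
  next
    case 3
    then have "{t..<0} = insert t {t + 1..<0}" by auto
    with 3 show ?thesis unfolding sumS_def by simp
  qed
qed

locale hungry_toda =
  fixes M N :: nat and Z :: "nat \<Rightarrow> real" and S :: "int \<Rightarrow> real" and W :: "int \<Rightarrow> nat \<Rightarrow> real"
  assumes M_pos: "0 < M" and N_pos: "0 < N"
    and Z_antimono: "\<And>i j. i \<le> j \<Longrightarrow> j < N \<Longrightarrow> Z j \<le> Z i"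
    and W_periodic: "\<And>m r. W m r = W (m mod int M) r"
    and W_condition: "\<And>m r0 r1. 0 \<le> m \<Longrightarrow> m < int M \<Longrightarrow> r0 < r1 \<Longrightarrow> r1 < N \<Longrightarrow>
        W m r1 - W (m+1) r1 + W (m+1) r0 - W m r0 + (Z r0 - Z r1) / real M \<ge> 0"
begin

definition tau :: "int \<Rightarrow> int \<Rightarrow> nat \<Rightarrow> real" where
  "tau k t n = Min (Tval W Z S M k t n ` incr_lists N n)"

lemma T_tau [simp]: "n \<le> N \<Longrightarrow> T W Z S M N k t n = ereal (tau k t n)"
  unfolding T_def tau_def by (auto simp: incr_lists_0 Tval_def)

lemma tau_0 [simp]: "tau k t 0 = 0"
  unfolding tau_def by (simp add: incr_lists_0 Tval_def)

lemma W_shift_M: "W (k + int M + int j) r = W (k + int j) r"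
proof -
  have "(k + int M + int j) mod int M = (k + int j) mod int M"
    using mod_add_self2[of "k + int j" "int M"] by (simp add: algebra_simps)
  then show ?thesis using W_periodic[of "k + int M + int j" r] W_periodic[of "k + int j" r] by simp
qed

lemma monge_frame_base_weight: "monge_frame N (base_weight W Z S M k t) Z"
proof
  show "\<And>i j. i \<le> j \<Longrightarrow> j < N \<Longrightarrow> Z j \<le> Z i" by (rule Z_antimono)
  fix \<rho> r0 r1 assume r: "r0 \<le> r1" "r1 < N"
  define m where "m = (k + int \<rho>) mod int M"
  have m: "0 \<le> m" "m < int M" using M_pos unfolding m_def by auto
  have W0: "W (k + int \<rho>) r = W m r" for r using W_periodic unfolding m_def by simp
  have W1: "W (k + int \<rho> + 1) r = W (m + 1) r" for r
    using W_periodic[of "k + int \<rho> + 1" r] W_periodic[of "m + 1" r]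
    unfolding m_def by (simp add: mod_add_left_eq)
  have step: "base_weight W Z S M k t (Suc \<rho>) r - base_weight W Z S M k t \<rho> r
      = W (m + 1) r - W m r + Z r / real M" for r
    unfolding base_weight_def W0[symmetric] W1[symmetric]
    by (simp add: algebra_simps add_divide_distrib)
  show "base_weight W Z S M k t (Suc \<rho>) r1 - base_weight W Z S M k t \<rho> r1
      \<le> base_weight W Z S M k t (Suc \<rho>) r0 - base_weight W Z S M k t \<rho> r0"
  proof (cases "r0 = r1")
    case False
    then have "W m r1 - W (m + 1) r1 + W (m + 1) r0 - W m r0 + (Z r0 - Z r1) / real M \<ge> 0"
      using W_condition[OF m] r by simp
    then show ?thesis unfolding step by (simp add: diff_divide_distrib)
  qed simp
qed

lemma tau_as_min_costs:
  fixes k t :: int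
  defines "F \<equiv> base_weight W Z S M k t"
  shows "tau k t n = monge_frame.min_cost N F Z pos_k n"
    and "tau (k + 1) t n = monge_frame.min_cost N F Z pos_k1 n"
    and "tau (k + int M) t n = monge_frame.min_cost N F Z pos_kM n"
    and "tau k (t + 1) n = monge_frame.min_capped_cost N F Z (S t) pos_k n"
    and "tau (k + 1) (t + 1) n = monge_frame.min_capped_cost N F Z (S t) pos_k1 n"
    and "tau (k + int M) (t + 1) n = monge_frame.min_capped_cost N F Z (S t) pos_kM n"
proof -
  interpret monge_frame N F Z unfolding F_def by (rule monge_frame_base_weight)
  have M: "0 < real M" using M_pos by simp
  have at_k: "Tval W Z S M k t n rs = total_cost pos_k n (nth rs)" for rs
    unfolding Tval_def total_cost_def cost_def unfolding F_def base_weight_def pos_k_def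
    by (rule sum.cong) (use M in \<open>auto simp: field_simps\<close>)
  have at_k1: "Tval W Z S M (k + 1) t n rs = total_cost pos_k1 n (nth rs)" for rs
    unfolding Tval_def total_cost_def cost_def unfolding F_def base_weight_def pos_k1_def
    by (rule sum.cong) (use M in \<open>auto simp: field_simps\<close>)
  have at_kM: "Tval W Z S M (k + int M) t n rs = total_cost pos_kM n (nth rs)" for rs
    unfolding Tval_def total_cost_def cost_def unfolding F_def base_weight_def pos_kM_def
    by (rule sum.cong) (use M W_shift_M in \<open>auto simp: field_simps\<close>)
  have Suc_t: "Tval W Z S M k' (t + 1) n rs = Tval W Z S M k' t n rs + capped_sum (S t) n (nth rs)"
    for k' rs unfolding Tval_def capped_sum_def sumS_Suc by (simp add: sum.distrib algebra_simps)
  show "tau k t n = min_cost pos_k n" "tau (k + 1) t n = min_cost pos_k1 n"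
    "tau (k + int M) t n = min_cost pos_kM n"
    unfolding tau_def min_cost_def at_k at_k1 at_kM by simp_all
  show "tau k (t + 1) n = min_capped_cost (S t) pos_k n"
    "tau (k + 1) (t + 1) n = min_capped_cost (S t) pos_k1 n"
    "tau (k + int M) (t + 1) n = min_capped_cost (S t) pos_kM n"
    unfolding tau_def min_capped_cost_def Suc_t at_k at_k1 at_kM by simp_all
qed

lemma tau_k1_le:
  "s \<le> N \<Longrightarrow> tau k t s + tau (k + 1) (t + 1) s \<le> tau (k + 1) t s + tau k (t + 1) s"
  using monge_frame.min_costs_k1_le[OF monge_frame_base_weight]
  by (simp add: tau_as_min_costs[of k t])

lemma tau_k1_le_shift:
  "1 \<le> s \<Longrightarrow> Suc s \<le> N \<Longrightarrow>
    tau k t s + tau (k + 1) (t + 1) s \<le> tau k t (Suc s) + tau (k + 1) (t + 1) (s - 1)"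
  using monge_frame.min_costs_k1_le_shift[OF monge_frame_base_weight]
  by (simp add: tau_as_min_costs[of k t])

lemma tau_k1_tight:
  "s \<le> N \<Longrightarrow> tau (k + 1) t s + tau k (t + 1) s \<le> tau k t s + tau (k + 1) (t + 1) s \<or>
    (Suc s \<le> N \<and> tau k t (Suc s) + tau (k + 1) (t + 1) (s - 1) \<le> tau k t s + tau (k + 1) (t + 1) s)"
  using monge_frame.min_costs_k1_tight[OF monge_frame_base_weight]
  by (simp add: tau_as_min_costs[of k t])

lemma tau_kM_le:
  "Suc s \<le> N \<Longrightarrow> tau k (t + 1) (Suc s) + tau (k + int M) t s
    \<le> tau k t (Suc s) + tau (k + int M) (t + 1) s + S t"
  using monge_frame.min_costs_kM_le[OF monge_frame_base_weight]
  by (simp add: tau_as_min_costs[of k t])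

lemma tau_kM_le_shift:
  "Suc s \<le> N \<Longrightarrow> tau k (t + 1) (Suc s) + tau (k + int M) t s
    \<le> tau (k + int M) t (Suc s) + tau k (t + 1) s"
  using monge_frame.min_costs_kM_le_shift[OF monge_frame_base_weight]
  by (simp add: tau_as_min_costs[of k t])

lemma tau_kM_tight:
  "Suc s \<le> N \<Longrightarrow> tau k t (Suc s) + tau (k + int M) (t + 1) s + S t
      \<le> tau k (t + 1) (Suc s) + tau (k + int M) t s \<or>
    tau (k + int M) t (Suc s) + tau k (t + 1) s \<le> tau k (t + 1) (Suc s) + tau (k + int M) t s"
  using monge_frame.min_costs_kM_tight[OF monge_frame_base_weight]
  by (simp add: tau_as_min_costs[of k t])

lemma Qf_Suc_time:
  assumes "n < N"
  shows "Qf W Z S M N k (t + 1) n = min (Df W Z S M N k t n) (Etf W Z S M N k t n)"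
proof -
  have le: "tau k t (Suc n) + tau (k + 1) (t + 1) (Suc n)
      \<le> tau (k + 1) t (Suc n) + tau k (t + 1) (Suc n)"
    using tau_k1_le assms by simp
  have tight: "tau (k + 1) t (Suc n) + tau k (t + 1) (Suc n)
      \<le> tau k t (Suc n) + tau (k + 1) (t + 1) (Suc n) \<or>
      (Suc (Suc n) \<le> N \<and> tau k t (Suc (Suc n)) + tau (k + 1) (t + 1) n
          \<le> tau k t (Suc n) + tau (k + 1) (t + 1) (Suc n))"
    using tau_k1_tight[of "Suc n"] assms by simp
  show ?thesis
  proof (cases "Suc (Suc n) \<le> N")
    case True
    have "tau k t (Suc n) + tau (k + 1) (t + 1) (Suc n)
        \<le> tau k t (Suc (Suc n)) + tau (k + 1) (t + 1) n"
      using tau_k1_le_shift[of "Suc n"] True by simp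
    with le tight True assms show ?thesis
      unfolding Qf_def Df_def Etf_def
      by (auto simp: ereal_min[symmetric] min_def simp del: ereal_min)
  next
    case False
    with le tight assms show ?thesis unfolding Qf_def Df_def Etf_def by simp
  qed
qed

lemma Ef_Suc_time:
  assumes "n + 1 < N"
  shows "Ef W Z S M N k (t + 1) n = min (Ff W Z S M N k t n) (Etf W Z S M N (k + int M) t n)"
proof -
  have "Suc (Suc n) \<le> N" using assms by simp
  with tau_kM_le[of "Suc n" k t] tau_kM_le_shift[of "Suc n" k t] tau_kM_tight[of "Suc n" k t] show ?thesis
    unfolding Ef_def Ff_def Etf_def by (auto simp: ereal_min[symmetric] min_def simp del: ereal_min)
qed

lemma Df_Suc:
  "n + 1 < N \<Longrightarrow>
    Df W Z S M N k t (n + 1) = Df W Z S M N k t n - Qf W Z S M N k (t + 1) n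
        + Qf W Z S M N k t (n + 1)"
  unfolding Df_def Qf_def by simp

lemma Etf_Suc_k:
  "n + 1 < N \<Longrightarrow>
    Etf W Z S M N (k + 1) t n = Etf W Z S M N k t n - Qf W Z S M N k (t + 1) n
        + Qf W Z S M N k t (n + 1)"
  unfolding Etf_def Qf_def by simp

lemma Ff_Suc:
  "n + 1 < N \<Longrightarrow>
    Ff W Z S M N k t (n + 1) = Ff W Z S M N k t n - Ef W Z S M N k (t + 1) n
        + Ef W Z S M N k t (n + 1)"
  unfolding Ff_def Ef_def by (cases "n + 3 \<le> N") simp_all

lemma Etf_Suc:
  "n + 1 < N \<Longrightarrow>
    Etf W Z S M N k t (n + 1) = Etf W Z S M N (k + int M) t n - Ef W Z S M N k (t + 1) n
        + Ef W Z S M N k t (n + 1)"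
  unfolding Etf_def Ef_def by (cases "n + 3 \<le> N") simp_all

lemma Ef_last: "Ef W Z S M N k t (N - 1) = \<infinity>"
  unfolding Ef_def using N_pos by simp

lemma Etf_last: "Etf W Z S M N k t (N - 1) = \<infinity>"
  unfolding Etf_def using N_pos by simp

lemma Df_0: "Df W Z S M N k t 0 = Qf W Z S M N k t 0"
  unfolding Df_def Qf_def using N_pos by simp

lemma sum_Qf_0: "(\<Sum>j<M. Qf W Z S M N (k + int j) t 0) = ereal (tau (k + int M) t 1 - tau k t 1)"
proof -
  have "Qf W Z S M N (k + int j) t 0
      = ereal (tau (k + int (Suc j)) t 1 - tau (k + int j) t 1)" for j
    unfolding Qf_def using N_pos by (simp add: ac_simps)
  then have "(\<Sum>j<M. Qf W Z S M N (k + int j) t 0)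
      = ereal (\<Sum>j<M. tau (k + int (Suc j)) t 1 - tau (k + int j) t 1)"
    by (simp add: sum_ereal)
  also have "(\<Sum>j<M. tau (k + int (Suc j)) t 1 - tau (k + int j) t 1)
      = tau (k + int M) t 1 - tau k t 1"
    by (subst sum_lessThan_telescope) simp
  finally show ?thesis .
qed

lemma Ff_0:
  "Ff W Z S M N k t 0
    = Ef W Z S M N k t 0 + max 0 (ereal (S t) - (\<Sum>j<M. Qf W Z S M N (k + int j) t 0))"
proof (cases "2 \<le> N")
  case True
  with tau_kM_le[of 0 k t] tau_kM_le_shift[of 0 k t] tau_kM_tight[of 0 k t] show ?thesis
    unfolding Ff_def Ef_def sum_Qf_0 by (auto simp: numeral_2_eq_2 max_def)
next
  case False
  with N_pos show ?thesis unfolding Ff_def Ef_def sum_Qf_0 by simp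
qed

lemma Etf_0:
  "Etf W Z S M N k t 0
    = Ef W Z S M N k t 0 + max 0 ((\<Sum>j<M. Qf W Z S M N (k + int j) t 0) - ereal (S t))"
proof (cases "2 \<le> N")
  case True
  with tau_kM_le[of 0 k t] tau_kM_le_shift[of 0 k t] tau_kM_tight[of 0 k t] show ?thesis
    unfolding Etf_def Ef_def sum_Qf_0 by (auto simp: numeral_2_eq_2 max_def)
next
  case False
  with N_pos show ?thesis unfolding Etf_def Ef_def sum_Qf_0 by simp
qed

end

theorem theorem5:
  fixes M N :: nat and Z :: "nat \<Rightarrow> real" and S :: "int \<Rightarrow> real"
    and W :: "int \<Rightarrow> nat \<Rightarrow> real"
  assumes "0 < M" and "0 < N"
    and Zmono: "\<And>i j. i \<le> j \<Longrightarrow> j < N \<Longrightarrow> Z j \<le> Z i"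
    and Wper: "\<And>m r. W m r = W (m mod int M) r"
    and Wcond: "\<And>m r0 r1. 0 \<le> m \<Longrightarrow> m < int M \<Longrightarrow> r0 < r1 \<Longrightarrow> r1 < N \<Longrightarrow>
        W m r1 - W (m+1) r1 + W (m+1) r0 - W m r0 + (Z r0 - Z r1) / real M \<ge> 0"
  shows "\<forall>k t.
      Ef W Z S M N k t (N-1) = \<infinity> \<and> Etf W Z S M N k t (N-1) = \<infinity>
    \<and> (\<forall>n<N. Qf W Z S M N k (t+1) n = min (Df W Z S M N k t n) (Etf W Z S M N k t n))
    \<and> (\<forall>n. n + 1 < N \<longrightarrow>
          Ef W Z S M N k (t+1) n = min (Ff W Z S M N k t n) (Etf W Z S M N (k + int M) t n)
        \<and> Df W Z S M N k t (n+1)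
            = Df W Z S M N k t n - Qf W Z S M N k (t+1) n + Qf W Z S M N k t (n+1)
        \<and> Etf W Z S M N (k+1) t n
            = Etf W Z S M N k t n - Qf W Z S M N k (t+1) n + Qf W Z S M N k t (n+1)
        \<and> Ff W Z S M N k t (n+1)
            = Ff W Z S M N k t n - Ef W Z S M N k (t+1) n + Ef W Z S M N k t (n+1)
        \<and> Etf W Z S M N k t (n+1)
            = Etf W Z S M N (k + int M) t n - Ef W Z S M N k (t+1) n + Ef W Z S M N k t (n+1))
    \<and> Df W Z S M N k t 0 = Qf W Z S M N k t 0
    \<and> Ff W Z S M N k t 0 = Ef W Z S M N k t 0
        + max 0 (ereal (S t) - (\<Sum>j<M. Qf W Z S M N (k + int j) t 0))
    \<and> Etf W Z S M N k t 0 = Ef W Z S M N k t 0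
        + max 0 ((\<Sum>j<M. Qf W Z S M N (k + int j) t 0) - ereal (S t))"
proof -
  interpret hungry_toda M N Z S W by unfold_locales (use assms in auto)
  show ?thesis
    by (intro allI conjI impI)
      (simp_all only: Ef_last Etf_last Qf_Suc_time Ef_Suc_time Df_Suc Etf_Suc_k Ff_Suc Etf_Suc Df_0 Ff_0 Etf_0)
qed

end
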